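(* Let $G$ be a locally compact abelian group, $K$ a compact subgroup, and $\Omega$ an open subgroup containing $K$. Consider the continuous map $$\Phi:\mathcal{S}(G)\to\mathcal{S}(\Omega)\times\mathcal{S}(G/K),\qquad H\mapsto\big(H\cap\Omega,\ (H+K)/K\big).$$ Let $R\in\mathcal{S}(\Omega)$ and let $M$ be a closed subgroup of $G$ containing $K$. Then the fiber $\Phi^{-1}(R,M/K)$ is either empty or homeomorphic to the compact group $\mathrm{Hom}\big((M+\Omega)/\Omega,\ K/(K\cap R)\big)$ (with the topology of pointwise convergence); in particular it is homogeneous.
   Context: $\mathcal{S}(X)$ denotes the space of closed subgroups of a locally compact group $X$ with the Chabauty topology (basic open sets $\{F: F\cap K'=\emptyset,\ F\cap U_i\ne\emptyset\ \forall i\}$, $K'$ compact, $U_i$ open). Homomorphisms are continuous; $(M+\Omega)/\Omega$ is discrete. *)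

theory Defs
  imports "HOL-Analysis.Analysis" "HOL-Algebra.Algebra"
begin

text \<open>Abelian topological groups are written multiplicatively (HOL-Algebra):
  H + K becomes H <#> K, cosets are r-cosets.\<close>

definition topological_group :: "('a, 'b) monoid_scheme \<Rightarrow> 'a topology \<Rightarrow> bool" where
  "topological_group G T \<longleftrightarrow> group G \<and> topspace T = carrier G \<and>
     continuous_map (prod_topology T T) T (\<lambda>(x, y). x \<otimes>\<^bsub>G\<^esub> y) \<and>
     continuous_map T T (\<lambda>x. inv\<^bsub>G\<^esub> x)"

definition LCA_group :: "('a, 'b) monoid_scheme \<Rightarrow> 'a topology \<Rightarrow> bool" where
  "LCA_group G T \<longleftrightarrow> topological_group G T \<and> comm_group G \<and>
     Hausdorff_space T \<and> locally_compact_space T"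

definition closed_subgroups :: "('a, 'b) monoid_scheme \<Rightarrow> 'a topology \<Rightarrow> 'a set set" where
  "closed_subgroups G T = {H. subgroup H G \<and> closedin T H}"

definition chabauty :: "('a, 'b) monoid_scheme \<Rightarrow> 'a topology \<Rightarrow> 'a set topology" where
  "chabauty G T = topology_generated_by
     ({{F \<in> closed_subgroups G T. F \<inter> C = {}} | C. compactin T C} \<union>
      {{F \<in> closed_subgroups G T. F \<inter> U \<noteq> {}} | U. openin T U})"

definition quotient_group_topology ::
  "('a, 'b) monoid_scheme \<Rightarrow> 'a topology \<Rightarrow> 'a set \<Rightarrow> 'a set topology" where
  "quotient_group_topology G T N =
     topology (\<lambda>U. U \<subseteq> rcosets\<^bsub>G\<^esub> N \<and> openin T (\<Union>U))"

definition cont_homs ::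
  "('c, 'd) monoid_scheme \<Rightarrow> 'c topology \<Rightarrow> ('e, 'f) monoid_scheme \<Rightarrow> 'e topology
   \<Rightarrow> ('c \<Rightarrow> 'e) set" where
  "cont_homs D TD E TE = {f \<in> extensional (carrier D). f \<in> hom D E \<and> continuous_map TD TE f}"

definition pointwise_hom_topology ::
  "('c, 'd) monoid_scheme \<Rightarrow> 'c topology \<Rightarrow> ('e, 'f) monoid_scheme \<Rightarrow> 'e topology
   \<Rightarrow> ('c \<Rightarrow> 'e) topology" where
  "pointwise_hom_topology D TD E TE =
     subtopology (product_topology (\<lambda>_. TE) (carrier D)) (cont_homs D TD E TE)"

end

theory Submission
  imports Defs
begin

text \<open>
  If the fiber is nonempty,
  fix a base point H0 in it.  Every coset of \<Omega> in M\<Omega> has a representative in H0, and two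
  elements of H0 represent the same coset exactly when they differ by an element of
  H0 \<inter> \<Omega> = R.  A continuous homomorphism \<phi> : M\<Omega>/\<Omega> \<rightarrow> K/(K \<inter> R) therefore determines the
  closed subgroup  \<Psi>(\<phi>) = {h k | h \<in> H0, k \<in> \<phi>(\<Omega> h)}  of the fiber, and every H in the fiber
  is recovered as \<Psi>(\<Phi> H) with  \<Phi> H (\<Omega> h) = {k \<in> K. h k \<in> H}.  Thus \<Psi> is a bijection from the
  homomorphisms onto the fiber.  Since M\<Omega>/\<Omega> is discrete, the homomorphisms form a closed
  subset of a product of copies of the compact group K/(K \<inter> R), hence a compact space; \<Psi> is
  continuous for the Chabauty topology (checked on subbasic sets), and the Chabauty space of
  a locally compact group is Hausdorff.  A continuous bijection from a compact space onto a
  Hausdorff space is a homeomorphism.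
\<close>

context comm_group
begin

lemma conj_cancel:
  "a \<in> carrier G \<Longrightarrow> b \<in> carrier G \<Longrightarrow> a \<otimes> b \<otimes> inv a = b"
  by (metis inv_closed m_assoc m_comm r_inv r_one)

lemma conj_cancel':
  "a \<in> carrier G \<Longrightarrow> b \<in> carrier G \<Longrightarrow> a \<otimes> (b \<otimes> inv a) = b"
  using conj_cancel by (simp add: m_assoc)

lemma factorisations_quotient_eq:
  assumes "a \<in> carrier G" "b \<in> carrier G" "c \<in> carrier G" "d \<in> carrier G"
    and "a \<otimes> b = c \<otimes> d"
  shows "c \<otimes> inv a = b \<otimes> inv d"
proof -
  have "c \<otimes> inv a = (c \<otimes> d) \<otimes> inv d \<otimes> inv a" using assms(1-4) by (simp add: m_assoc)
  also have "\<dots> = (a \<otimes> b) \<otimes> inv d \<otimes> inv a" by (simp only: assms(5))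
  also have "\<dots> = a \<otimes> (b \<otimes> inv d) \<otimes> inv a" using assms(1-4) by (simp add: m_assoc)
  also have "\<dots> = b \<otimes> inv d" using assms conj_cancel by simp
  finally show ?thesis .
qed

lemma quotient_common_factor:
  assumes "a \<in> carrier G" "b \<in> carrier G" "c \<in> carrier G"
  shows "a \<otimes> b \<otimes> inv (a \<otimes> c) = b \<otimes> inv c"
proof -
  have "a \<otimes> b \<otimes> inv (a \<otimes> c) = (a \<otimes> b \<otimes> inv a) \<otimes> inv c" using assms by (simp add: inv_mult m_assoc)
  also have "\<dots> = b \<otimes> inv c" using assms conj_cancel by simp
  finally show ?thesis .
qed

end

section \<open>Topological abelian groups\<close>

locale topological_comm_group = comm_group G for G (structure) +
  fixes T :: "'a topology"
  assumes topspace_eq: "topspace T = carrier G"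
    and mult_continuous: "continuous_map (prod_topology T T) T (\<lambda>(x, y). x \<otimes> y)"
    and inv_continuous: "continuous_map T T (\<lambda>x. inv x)"

lemma LCA_group_imp_topological_comm_group:
  "LCA_group G T \<Longrightarrow> topological_comm_group G T"
  unfolding LCA_group_def topological_group_def topological_comm_group_def
    topological_comm_group_axioms_def by auto

context topological_comm_group
begin

lemma continuous_map_right_translation:
  assumes "a \<in> carrier G" shows "continuous_map T T (\<lambda>x. x \<otimes> a)"
proof -
  have "continuous_map T (prod_topology T T) (\<lambda>x. (x, a))"
    by (intro continuous_map_pairedI) (auto simp: topspace_eq assms)
  from continuous_map_compose[OF this mult_continuous] show ?thesis by (simp add: o_def)
qed

lemma rcoset_eq_preimage:
  assumes "U \<subseteq> carrier G" "a \<in> carrier G"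
  shows "U #> a = {x \<in> topspace T. x \<otimes> inv a \<in> U}"
proof (auto simp: r_coset_def topspace_eq)
  fix h assume "h \<in> U" then show "h \<otimes> a \<in> carrier G" using assms by auto
next
  fix h assume "h \<in> U" then show "h \<otimes> a \<otimes> inv a \<in> U" using assms by (auto simp: m_assoc)
next
  fix x assume "x \<in> carrier G" "x \<otimes> inv a \<in> U"
  then show "\<exists>h\<in>U. x = h \<otimes> a" using assms by (intro bexI[of _ "x \<otimes> inv a"]) (auto simp: m_assoc)
qed

lemma openin_rcoset:
  assumes "openin T U" "a \<in> carrier G" shows "openin T (U #> a)"
proof -
  have "U \<subseteq> carrier G" using openin_subset[OF assms(1)] topspace_eq by auto
  then show ?thesis
    using rcoset_eq_preimage openin_continuous_map_preimage[OF continuous_map_right_translation assms(1)]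
      assms(2) by auto
qed

lemma closedin_rcoset:
  assumes "closedin T U" "a \<in> carrier G" shows "closedin T (U #> a)"
proof -
  have "U \<subseteq> carrier G" using closedin_subset[OF assms(1)] topspace_eq by auto
  then show ?thesis
    using rcoset_eq_preimage closedin_continuous_map_preimage[OF continuous_map_right_translation assms(1)]
      assms(2) by auto
qed

lemma mult_neighbourhoods:
  assumes W: "openin T W" and a: "a \<in> carrier G" and b: "b \<in> carrier G" and ab: "a \<otimes> b \<in> W"
  obtains U V where "openin T U" "openin T V" "a \<in> U" "b \<in> V" "\<forall>u\<in>U. \<forall>v\<in>V. u \<otimes> v \<in> W"
proof -
  define P where "P = {z \<in> topspace (prod_topology T T). (\<lambda>(x, y). x \<otimes> y) z \<in> W}"
  have "openin (prod_topology T T) P"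
    unfolding P_def using openin_continuous_map_preimage[OF mult_continuous W] .
  moreover have "(a, b) \<in> P" using a b ab by (simp add: topspace_eq P_def)
  ultimately obtain U V where UV: "openin T U" "openin T V" "a \<in> U" "b \<in> V" "U \<times> V \<subseteq> P"
    unfolding openin_prod_topology_alt by meson
  moreover have "u \<otimes> v \<in> W" if "u \<in> U" "v \<in> V" for u v
    using subsetD[OF UV(5), of "(u, v)"] that unfolding P_def by simp
  ultimately show ?thesis using that by blast
qed

lemma triple_quotient_avoids_closed:
  assumes N: "closedin T N"
    and k: "k1 \<in> carrier G" "k2 \<in> carrier G" "k3 \<in> carrier G" and notin: "k1 \<otimes> k2 \<otimes> inv k3 \<notin> N"
  obtains U1 U2 U3 where "openin T U1" "openin T U2" "openin T U3" "k1 \<in> U1" "k2 \<in> U2" "k3 \<in> U3"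
    "\<forall>u1\<in>U1. \<forall>u2\<in>U2. \<forall>u3\<in>U3. u1 \<otimes> u2 \<otimes> inv u3 \<notin> N"
proof -
  define W where "W = topspace T - N"
  have W: "openin T W" "k1 \<otimes> k2 \<otimes> inv k3 \<in> W"
    using openin_diff[OF openin_topspace N] notin k topspace_eq unfolding W_def by auto
  obtain U12 V3 where U12: "openin T U12" "openin T V3" "k1 \<otimes> k2 \<in> U12" "inv k3 \<in> V3"
    "\<forall>u\<in>U12. \<forall>v\<in>V3. u \<otimes> v \<in> W"
    using mult_neighbourhoods[OF W(1) _ _ W(2)] k by blast
  obtain U1 U2 where U1: "openin T U1" "openin T U2" "k1 \<in> U1" "k2 \<in> U2"
    "\<forall>u\<in>U1. \<forall>v\<in>U2. u \<otimes> v \<in> U12"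
    using mult_neighbourhoods[OF U12(1) k(1,2) U12(3)] by blast
  define U3 where "U3 = {z \<in> topspace T. inv z \<in> V3}"
  have "openin T U3" "k3 \<in> U3"
    using openin_continuous_map_preimage[OF inv_continuous U12(2)] U12(4) k(3) topspace_eq
    unfolding U3_def by auto
  moreover have "\<forall>u1\<in>U1. \<forall>u2\<in>U2. \<forall>u3\<in>U3. u1 \<otimes> u2 \<otimes> inv u3 \<notin> N"
    using U1(5) U12(5) unfolding U3_def W_def by blast
  ultimately show ?thesis using that U1 by blast
qed

lemma rcos_mem_iff:
  assumes "subgroup H G" "x \<in> carrier G" "y \<in> carrier G"
  shows "y \<in> H #> x \<longleftrightarrow> y \<otimes> inv x \<in> H"
  using subgroup.rcos_module[OF assms(1) is_group assms(2,3)] .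

lemma rcos_eq_iff:
  assumes H: "subgroup H G" and x: "x \<in> carrier G" and y: "y \<in> carrier G"
  shows "H #> x = H #> y \<longleftrightarrow> x \<otimes> inv y \<in> H"
proof
  assume "H #> x = H #> y"
  then have "x \<in> H #> y" using rcos_self[OF x H] by simp
  then show "x \<otimes> inv y \<in> H" using rcos_mem_iff[OF H y x] by simp
next
  assume "x \<otimes> inv y \<in> H"
  then have "x \<in> H #> y" using rcos_mem_iff[OF H y x] by simp
  then show "H #> x = H #> y" using repr_independence[OF _ y H] by simp
qed

lemma rcos_same:
  assumes "subgroup H G" "x \<in> carrier G" "y \<in> H #> x"
  shows "H #> y = H #> x"
  using repr_independence[OF assms(3,2,1)] by simp

text \<open>An open subgroup is closed: its complement is a union of open cosets.\<close>
lemma open_subgroup_closed: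
  assumes "subgroup H G" "openin T H" shows "closedin T H"
proof -
  have "carrier G - H = (\<Union>x\<in>carrier G - H. H #> x)"
  proof
    show "carrier G - H \<subseteq> (\<Union>x\<in>carrier G - H. H #> x)"
      using rcos_self[OF _ assms(1)] by blast
    show "(\<Union>x\<in>carrier G - H. H #> x) \<subseteq> carrier G - H"
    proof
      fix y assume "y \<in> (\<Union>x\<in>carrier G - H. H #> x)"
      then obtain x where x: "x \<in> carrier G" "x \<notin> H" "y \<in> H #> x" by blast
      have y: "y \<in> carrier G" using r_coset_subset_G[OF subgroup.subset[OF assms(1)] x(1)] x(3) by blast
      moreover have "y \<notin> H"
      proof
        assume "y \<in> H"
        have "H #> x = H #> y" using rcos_same[OF assms(1) x(1) x(3)] by simp
        also have "\<dots> = H" using coset_join2[OF y assms(1) \<open>y \<in> H\<close>] .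
        finally show False using rcos_self[OF x(1) assms(1)] x(2) by simp
      qed
      ultimately show "y \<in> carrier G - H" by blast
    qed
  qed
  moreover have "openin T (\<Union>x\<in>carrier G - H. H #> x)"
    using openin_rcoset assms by auto
  ultimately show ?thesis
    unfolding closedin_def using topspace_eq subgroup.subset[OF assms(1)] by auto
qed

lemma subgroup_inter_rcos:
  assumes S: "subgroup S G" and W: "subgroup W G" and y: "y \<in> S"
  shows "S \<inter> (W #> y) = (S \<inter> W) #> y"
proof -
  have yc: "y \<in> carrier G" using y subgroup.subset[OF S] by blast
  have SO: "subgroup (S \<inter> W) G" using subgroups_Inter_pair[OF S W] .
  have "z \<in> S \<longleftrightarrow> z \<otimes> inv y \<in> S" if "z \<in> carrier G" for z
  proof
    assume "z \<otimes> inv y \<in> S"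
    then have "z \<otimes> inv y \<otimes> y \<in> S" using y subgroup.m_closed[OF S] by blast
    then show "z \<in> S" using that yc by (simp add: m_assoc)
  qed (use y subgroup.m_closed[OF S] subgroup.m_inv_closed[OF S] in blast)
  then show ?thesis
    using rcos_mem_iff[OF W yc] rcos_mem_iff[OF SO yc] r_coset_subset_G[OF _ yc]
      subgroup.subset[OF W] subgroup.subset[OF SO] by blast
qed

text \<open>A subgroup whose intersection with an open subgroup W is closed is itself closed: near
  any point outside S, inside its open W-coset, S is either absent or a translate of S \<inter> W.\<close>
lemma closedin_subgroup_by_open_subgroup:
  assumes S: "subgroup S G" and W: "subgroup W G" "openin T W" and SO: "closedin T (S \<inter> W)"
  shows "closedin T S"
proof -
  have "openin T (carrier G - S)"
  proof (rule openin_subopen[THEN iffD2], intro ballI)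
    fix x assume x: "x \<in> carrier G - S"
    have Ox: "openin T (W #> x)" "x \<in> W #> x" "W #> x \<subseteq> carrier G"
      using openin_rcoset[OF W(2)] rcos_self[OF _ W(1)] r_coset_subset_G subgroup.subset[OF W(1)] x
      by auto
    show "\<exists>U. openin T U \<and> x \<in> U \<and> U \<subseteq> carrier G - S"
    proof (cases "S \<inter> (W #> x) = {}")
      case True
      then show ?thesis using Ox by blast
    next
      case False
      then obtain y where y: "y \<in> S" "y \<in> W #> x" by blast
      have "W #> y = W #> x" using rcos_same[OF W(1)] x y by blast
      then have eq: "S \<inter> (W #> x) = (S \<inter> W) #> y" using subgroup_inter_rcos[OF S W(1) y(1)] by simp
      have "closedin T ((S \<inter> W) #> y)"
        using closedin_rcoset[OF SO] y subgroup.subset[OF S] by blast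
      then have "openin T ((W #> x) - ((S \<inter> W) #> y))" using openin_diff Ox(1) by blast
      moreover have "(W #> x) - ((S \<inter> W) #> y) = (W #> x) - S" using eq by blast
      ultimately show ?thesis using Ox x by (intro exI[of _ "(W #> x) - S"]) auto
    qed
  qed
  then show ?thesis unfolding closedin_def using topspace_eq subgroup.subset[OF S] by auto
qed

text \<open>The product of a compact set and a closed set is closed: it is the projection of a
  closed subset of (compact) \<times> G, and projections along a compact factor are closed maps.\<close>
lemma closedin_compact_set_mult:
  assumes C: "compactin T C" and S: "closedin T S"
  shows "closedin T (C <#> S)"
proof -
  have Cc: "C \<subseteq> carrier G" using compactin_subset_topspace[OF C] topspace_eq by simp
  have Sc: "S \<subseteq> carrier G" using closedin_subset[OF S] topspace_eq by simp
  define g where "g = (\<lambda>z::'a \<times> 'a. inv (fst z) \<otimes> snd z)"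
  have "continuous_map (prod_topology (subtopology T C) T) (prod_topology T T)
          (\<lambda>z. (inv (fst z), snd z))"
    using continuous_map_compose[OF continuous_map_fst continuous_map_from_subtopology[OF inv_continuous]]
      continuous_map_snd by (intro continuous_map_pairedI) (simp_all add: o_def)
  from continuous_map_compose[OF this mult_continuous]
  have "continuous_map (prod_topology (subtopology T C) T) T g" unfolding g_def by (simp add: o_def)
  then have "closedin (prod_topology (subtopology T C) T)
               {z \<in> topspace (prod_topology (subtopology T C) T). g z \<in> S}"
    using closedin_continuous_map_preimage S by blast
  then have "closedin T (snd ` {z \<in> topspace (prod_topology (subtopology T C) T). g z \<in> S})"
    using closed_map_snd[OF compact_space_subtopology[OF C]] unfolding closed_map_def by blast
  moreover have "snd ` {z \<in> topspace (prod_topology (subtopology T C) T). g z \<in> S} = C <#> S"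
  proof (intro equalityI subsetI)
    fix y assume "y \<in> snd ` {z \<in> topspace (prod_topology (subtopology T C) T). g z \<in> S}"
    then obtain c where c: "c \<in> C" "y \<in> carrier G" "inv c \<otimes> y \<in> S"
      unfolding g_def using Cc by (auto simp: topspace_eq)
    then have "y = c \<otimes> (inv c \<otimes> y)" using Cc by (auto simp: m_assoc[symmetric])
    then show "y \<in> C <#> S" unfolding set_mult_def using c by blast
  next
    fix y assume "y \<in> C <#> S"
    then obtain c s where cs: "c \<in> C" "s \<in> S" "y = c \<otimes> s" unfolding set_mult_def by blast
    moreover have "c \<in> carrier G" "s \<in> carrier G" using cs Cc Sc by auto
    ultimately have "inv c \<otimes> y = s" by (simp add: m_assoc[symmetric])
    then have "(c, y) \<in> {z \<in> topspace (prod_topology (subtopology T C) T). g z \<in> S}"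
      unfolding g_def using cs Cc Sc by (auto simp: topspace_eq)
    then show "y \<in> snd ` {z \<in> topspace (prod_topology (subtopology T C) T). g z \<in> S}" by force
  qed
  ultimately show ?thesis by simp
qed

lemma rcosets_subgroup_carrier: "rcosets\<^bsub>G\<lparr>carrier := A\<rparr>\<^esub> N = (\<lambda>x. N #> x) ` A"
  by (auto simp: RCOSETS_def)

lemma Union_rcosets_subgroup:
  assumes A: "subgroup A G" and N: "subgroup N G" "N \<subseteq> A"
  shows "\<Union>((\<lambda>x. N #> x) ` A) = A"
proof
  show "\<Union>((\<lambda>x. N #> x) ` A) \<subseteq> A"
    using N(2) subgroup.m_closed[OF A] by (auto simp: r_coset_def)
  show "A \<subseteq> \<Union>((\<lambda>x. N #> x) ` A)"
    using rcos_self[OF _ N(1)] subgroup.subset[OF A] by blast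
qed

text \<open>The open-set predicate of the quotient topology really is a topology, so the defining
  condition characterises its open sets.\<close>
lemma openin_quotient_group_topology:
  assumes A: "subgroup A G" and N: "subgroup N G" "N \<subseteq> A"
  shows "openin (quotient_group_topology (G\<lparr>carrier := A\<rparr>) (subtopology T A) N) U \<longleftrightarrow>
         U \<subseteq> (\<lambda>x. N #> x) ` A \<and> openin (subtopology T A) (\<Union>U)"
proof -
  have disjoint: "\<Union>(S \<inter> V) = \<Union>S \<inter> \<Union>V" if "S \<subseteq> (\<lambda>x. N #> x) ` A" "V \<subseteq> (\<lambda>x. N #> x) ` A"
    for S V
  proof -
    have "c1 = c2" if c: "c1 \<in> S" "c2 \<in> V" "y \<in> c1" "y \<in> c2" for c1 c2 y
    proof -
      obtain x1 x2 where x: "x1 \<in> A" "x2 \<in> A" "c1 = N #> x1" "c2 = N #> x2"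
        using c \<open>S \<subseteq> _\<close> \<open>V \<subseteq> _\<close> by blast
      then have xc: "x1 \<in> carrier G" "x2 \<in> carrier G" using subgroup.subset[OF A] by auto
      have "N #> y = N #> x1" using rcos_same[OF N(1) xc(1)] c(3) x(3) by blast
      moreover have "N #> y = N #> x2" using rcos_same[OF N(1) xc(2)] c(4) x(4) by blast
      ultimately show ?thesis using x(3,4) by simp
    qed
    then show ?thesis by blast
  qed
  have "istopology (\<lambda>U. U \<subseteq> (\<lambda>x. N #> x) ` A \<and> openin (subtopology T A) (\<Union>U))"
    unfolding istopology_def
  proof (rule conjI; intro allI impI)
    fix S V
    assume "S \<subseteq> (\<lambda>x. N #> x) ` A \<and> openin (subtopology T A) (\<Union>S)"
      and "V \<subseteq> (\<lambda>x. N #> x) ` A \<and> openin (subtopology T A) (\<Union>V)"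
    then show "S \<inter> V \<subseteq> (\<lambda>x. N #> x) ` A \<and> openin (subtopology T A) (\<Union>(S \<inter> V))"
      using disjoint by auto
  next
    fix \<K> assume "\<forall>U\<in>\<K>. U \<subseteq> (\<lambda>x. N #> x) ` A \<and> openin (subtopology T A) (\<Union>U)"
    moreover have "\<Union>(\<Union>\<K>) = \<Union>(Union ` \<K>)" by blast
    ultimately show "\<Union>\<K> \<subseteq> (\<lambda>x. N #> x) ` A \<and> openin (subtopology T A) (\<Union>(\<Union>\<K>))"
      by (auto intro: openin_Union)
  qed
  then show ?thesis
    unfolding quotient_group_topology_def rcosets_subgroup_carrier by simp
qed

lemma topspace_quotient_group_topology:
  assumes A: "subgroup A G" and N: "subgroup N G" "N \<subseteq> A"
  shows "topspace (quotient_group_topology (G\<lparr>carrier := A\<rparr>) (subtopology T A) N) = (\<lambda>x. N #> x) ` A"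
proof
  show "topspace (quotient_group_topology (G\<lparr>carrier := A\<rparr>) (subtopology T A) N) \<subseteq> (\<lambda>x. N #> x) ` A"
    using openin_quotient_group_topology[OF assms] openin_topspace by blast
  have "openin (subtopology T A) A"
    using subgroup.subset[OF A] topspace_eq by (simp add: openin_subtopology_refl)
  then have "openin (quotient_group_topology (G\<lparr>carrier := A\<rparr>) (subtopology T A) N) ((\<lambda>x. N #> x) ` A)"
    using openin_quotient_group_topology[OF assms] Union_rcosets_subgroup[OF assms] by simp
  then show "(\<lambda>x. N #> x) ` A \<subseteq> topspace (quotient_group_topology (G\<lparr>carrier := A\<rparr>) (subtopology T A) N)"
    using openin_subset by blast
qed

subsection \<open>The Chabauty topology\<close>

lemma topspace_chabauty: "topspace (chabauty G T) = closed_subgroups G T"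
proof -
  have "{F \<in> closed_subgroups G T. F \<inter> {} = {}} \<in>
      {{F \<in> closed_subgroups G T. F \<inter> C = {}} | C. compactin T C}"
    using compactin_empty by blast
  then show ?thesis unfolding chabauty_def topology_generated_by_topspace by auto
qed

lemma openin_chabauty_avoiding:
  "compactin T C \<Longrightarrow> openin (chabauty G T) {F \<in> closed_subgroups G T. F \<inter> C = {}}"
  unfolding chabauty_def by (rule topology_generated_by_Basis) blast

lemma openin_chabauty_meeting:
  "openin T U \<Longrightarrow> openin (chabauty G T) {F \<in> closed_subgroups G T. F \<inter> U \<noteq> {}}"
  unfolding chabauty_def by (rule topology_generated_by_Basis) blast

lemma continuous_map_into_chabauty:
  assumes maps: "f ` topspace Y \<subseteq> closed_subgroups G T"
    and avoiding: "\<And>C. compactin T C \<Longrightarrow> openin Y {x \<in> topspace Y. f x \<inter> C = {}}"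
    and meeting: "\<And>U. openin T U \<Longrightarrow> openin Y {x \<in> topspace Y. f x \<inter> U \<noteq> {}}"
  shows "continuous_map Y (chabauty G T) f"
  unfolding chabauty_def
proof (rule continuous_on_generated_topo)
  fix S
  assume "S \<in> {{F \<in> closed_subgroups G T. F \<inter> C = {}} | C. compactin T C} \<union>
              {{F \<in> closed_subgroups G T. F \<inter> U \<noteq> {}} | U. openin T U}"
  then consider C where "compactin T C" "S = {F \<in> closed_subgroups G T. F \<inter> C = {}}"
    | U where "openin T U" "S = {F \<in> closed_subgroups G T. F \<inter> U \<noteq> {}}" by blast
  then show "openin Y (f -` S \<inter> topspace Y)"
  proof cases
    case 1
    then have "f -` S \<inter> topspace Y = {x \<in> topspace Y. f x \<inter> C = {}}" using maps by auto
    then show ?thesis using avoiding[OF 1(1)] by simp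
  next
    case 2
    then have "f -` S \<inter> topspace Y = {x \<in> topspace Y. f x \<inter> U \<noteq> {}}" using maps by auto
    then show ?thesis using meeting[OF 2(1)] by simp
  qed
qed (use maps topspace_chabauty[unfolded chabauty_def topology_generated_by_topspace] in auto)

text \<open>For a locally compact Hausdorff group the Chabauty space is Hausdorff: if x \<in> F1 - F2,
  a compact neighbourhood V of x missing F2 separates F1 (meets int V) from F2 (avoids V).\<close>
lemma chabauty_separation:
  assumes Haus: "Hausdorff_space T" and lc: "locally_compact_space T"
    and F: "F1 \<in> closed_subgroups G T" "F2 \<in> closed_subgroups G T" and x: "x \<in> F1" "x \<notin> F2"
  obtains U V where "openin (chabauty G T) U" "openin (chabauty G T) V" "F1 \<in> U" "F2 \<in> V" "disjnt U V"
proof -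
  have "openin T (topspace T - F2)" using F(2) unfolding closed_subgroups_def closedin_def by blast
  moreover have "x \<in> topspace T - F2"
    using F(1) x subgroup.subset topspace_eq unfolding closed_subgroups_def by blast
  moreover have "neighbourhood_base_of (compactin T) T"
    using locally_compact_space_neighbourhood_base Haus lc by blast
  ultimately obtain U0 V0 where UV: "openin T U0" "compactin T V0" "x \<in> U0" "U0 \<subseteq> V0"
      "V0 \<subseteq> topspace T - F2"
    unfolding neighbourhood_base_of by meson
  show ?thesis
  proof (rule that)
    show "openin (chabauty G T) {F \<in> closed_subgroups G T. F \<inter> U0 \<noteq> {}}"
      using openin_chabauty_meeting[OF UV(1)] .
    show "openin (chabauty G T) {F \<in> closed_subgroups G T. F \<inter> V0 = {}}"
      using openin_chabauty_avoiding[OF UV(2)] .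
  qed (use F x UV in \<open>auto simp: disjnt_def\<close>)
qed

lemma Hausdorff_chabauty:
  assumes "Hausdorff_space T" "locally_compact_space T"
  shows "Hausdorff_space (chabauty G T)"
  unfolding Hausdorff_space_def topspace_chabauty
proof (intro allI impI, elim conjE)
  fix F1 F2 assume F: "F1 \<in> closed_subgroups G T" "F2 \<in> closed_subgroups G T" "F1 \<noteq> F2"
  then consider x where "x \<in> F1" "x \<notin> F2" | x where "x \<in> F2" "x \<notin> F1" by blast
  then show "\<exists>U V. openin (chabauty G T) U \<and> openin (chabauty G T) V \<and> F1 \<in> U \<and> F2 \<in> V \<and> disjnt U V"
  proof cases
    case 1
    then show ?thesis using chabauty_separation[OF assms F(1,2)] by metis
  next
    case 2
    then show ?thesis using chabauty_separation[OF assms F(2,1)] by (metis disjnt_sym)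
  qed
qed

end

section \<open>The quotient groups of the proposition and the homomorphism space\<close>

text \<open>The data of the proposition: K compact, \<Omega> open containing K, R a closed subgroup of
  \<Omega>, and M a subgroup containing K.\<close>
locale fiber_setting = topological_comm_group +
  fixes K \<Omega> M R :: "'a set"
  assumes Hausdorff: "Hausdorff_space T" and locally_compact: "locally_compact_space T"
    and K_subgroup: "subgroup K G" and K_compact: "compactin T K"
    and \<Omega>_subgroup: "subgroup \<Omega> G" and \<Omega>_open: "openin T \<Omega>" and K_\<Omega>: "K \<subseteq> \<Omega>"
    and R_subgroup: "subgroup R G" and R_\<Omega>: "R \<subseteq> \<Omega>" and R_closed: "closedin T R"
    and M_subgroup: "subgroup M G" and K_M: "K \<subseteq> M"
begin

abbreviation "KR \<equiv> K \<inter> R"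
abbreviation "M\<Omega> \<equiv> M <#> \<Omega>"
abbreviation "D \<equiv> (G\<lparr>carrier := M\<Omega>\<rparr>) Mod \<Omega>"
abbreviation "TD \<equiv> quotient_group_topology (G\<lparr>carrier := M\<Omega>\<rparr>) (subtopology T M\<Omega>) \<Omega>"
abbreviation "E \<equiv> (G\<lparr>carrier := K\<rparr>) Mod KR"
abbreviation "TE \<equiv> quotient_group_topology (G\<lparr>carrier := K\<rparr>) (subtopology T K) KR"
abbreviation "Hom \<equiv> cont_homs D TD E TE"
abbreviation "Maps \<equiv> product_topology (\<lambda>_. TE) (carrier D)"
abbreviation "PT \<equiv> pointwise_hom_topology D TD E TE"

abbreviation "fiber \<equiv> {H \<in> closed_subgroups G T. H \<inter> \<Omega> = R \<and> (\<lambda>h. K #> h) ` H = (\<lambda>m. K #> m) ` M}"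

lemma K_carrier: "K \<subseteq> carrier G" using subgroup.subset[OF K_subgroup] .
lemma \<Omega>_carrier: "\<Omega> \<subseteq> carrier G" using subgroup.subset[OF \<Omega>_subgroup] .
lemma R_carrier: "R \<subseteq> carrier G" using subgroup.subset[OF R_subgroup] .
lemma M_carrier: "M \<subseteq> carrier G" using subgroup.subset[OF M_subgroup] .

lemma KR_subgroup: "subgroup KR G"
  using subgroups_Inter_pair[OF K_subgroup R_subgroup] .

lemma M\<Omega>_subgroup: "subgroup M\<Omega> G"
  using mult_subgroups[OF M_subgroup \<Omega>_subgroup] .

lemma \<Omega>_subset_M\<Omega>: "\<Omega> \<subseteq> M\<Omega>"
  using \<Omega>_carrier subgroup.one_closed[OF M_subgroup] unfolding set_mult_def by force

lemma K_closed: "closedin T K"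
  using compactin_imp_closedin[OF Hausdorff K_compact] .

lemma KR_closed: "closedin T KR"
  using K_closed R_closed by blast

lemma carrier_D: "carrier D = (\<lambda>x. \<Omega> #> x) ` M\<Omega>"
  by (simp add: FactGroup_def rcosets_subgroup_carrier)

lemma carrier_E: "carrier E = (\<lambda>x. KR #> x) ` K"
  by (simp add: FactGroup_def rcosets_subgroup_carrier)

lemma topspace_TD: "topspace TD = carrier D"
  using topspace_quotient_group_topology[OF M\<Omega>_subgroup \<Omega>_subgroup \<Omega>_subset_M\<Omega>] carrier_D by simp

lemma topspace_TE: "topspace TE = carrier E"
  using topspace_quotient_group_topology[OF K_subgroup KR_subgroup] carrier_E by auto

text \<open>Since \<Omega> is open, D is discrete.\<close>
lemma openin_TD: "openin TD U \<longleftrightarrow> U \<subseteq> carrier D"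
proof
  assume "openin TD U" then show "U \<subseteq> carrier D" using openin_subset topspace_TD by blast
next
  assume U: "U \<subseteq> carrier D"
  have "openin T (\<Union>U)"
    using U openin_rcoset[OF \<Omega>_open] subgroup.subset[OF M\<Omega>_subgroup] unfolding carrier_D
    by (intro openin_Union) auto
  moreover have "\<Union>U \<subseteq> M\<Omega>"
    using U carrier_D Union_rcosets_subgroup[OF M\<Omega>_subgroup \<Omega>_subgroup \<Omega>_subset_M\<Omega>] by blast
  ultimately have "openin (subtopology T M\<Omega>) (\<Union>U)"
    by (metis inf.absorb_iff2 openin_subtopology_Int2)
  then show "openin TD U"
    using openin_quotient_group_topology[OF M\<Omega>_subgroup \<Omega>_subgroup \<Omega>_subset_M\<Omega>] U carrier_D by simp
qed

lemma openin_TE: "openin TE U \<longleftrightarrow> U \<subseteq> carrier E \<and> openin (subtopology T K) (\<Union>U)"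
  using openin_quotient_group_topology[OF K_subgroup KR_subgroup] carrier_E by auto

lemma rcos_mult_KR:
  "a \<in> carrier G \<Longrightarrow> b \<in> carrier G \<Longrightarrow> (KR #> a) <#> (KR #> b) = KR #> (a \<otimes> b)"
  using normal.rcos_sum[OF subgroup_imp_normal[OF KR_subgroup]] .

lemma rcos_mult_\<Omega>:
  "a \<in> carrier G \<Longrightarrow> b \<in> carrier G \<Longrightarrow> (\<Omega> #> a) <#> (\<Omega> #> b) = \<Omega> #> (a \<otimes> b)"
  using normal.rcos_sum[OF subgroup_imp_normal[OF \<Omega>_subgroup]] .

lemma carrier_E_member:
  assumes c: "c \<in> carrier E" and k: "k \<in> c"
  shows "c = KR #> k" "k \<in> K"
proof -
  obtain a where a: "a \<in> K" "c = KR #> a" using c carrier_E by auto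
  then show "c = KR #> k" using rcos_same[OF KR_subgroup] k K_carrier by auto
  show "k \<in> K" using Union_rcosets_subgroup[OF K_subgroup KR_subgroup] a k by blast
qed

lemma carrier_E_elem:
  assumes "c \<in> carrier E" obtains k where "k \<in> K" "k \<in> c" "c = KR #> k"
  using assms carrier_E rcos_self[OF _ KR_subgroup] K_carrier by blast

lemma E_mult_eq_iff:
  assumes c: "c1 \<in> carrier E" "c2 \<in> carrier E" "c3 \<in> carrier E"
    and u: "u1 \<in> c1" "u2 \<in> c2" "u3 \<in> c3"
  shows "c3 = c1 <#> c2 \<longleftrightarrow> u1 \<otimes> u2 \<otimes> inv u3 \<in> KR"
proof -
  have uK: "u1 \<in> carrier G" "u2 \<in> carrier G" "u3 \<in> carrier G"
    using carrier_E_member(2)[OF c(1) u(1)] carrier_E_member(2)[OF c(2) u(2)]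
      carrier_E_member(2)[OF c(3) u(3)] K_carrier by auto
  have "c1 <#> c2 = KR #> (u1 \<otimes> u2)"
    using carrier_E_member(1)[OF c(1) u(1)] carrier_E_member(1)[OF c(2) u(2)] rcos_mult_KR uK by simp
  then have "c3 = c1 <#> c2 \<longleftrightarrow> KR #> (u1 \<otimes> u2) = KR #> u3"
    using carrier_E_member(1)[OF c(3) u(3)] by auto
  then show ?thesis using rcos_eq_iff[OF KR_subgroup] uK by simp
qed

lemma openin_TE_meeting:
  assumes U: "openin T U"
  shows "openin TE {c \<in> carrier E. c \<inter> U \<noteq> {}}"
proof -
  have Uc: "U \<subseteq> carrier G" using openin_subset[OF U] topspace_eq by simp
  have "\<Union>{c \<in> carrier E. c \<inter> U \<noteq> {}} = K \<inter> (\<Union>n\<in>KR. U #> n)"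
  proof (intro equalityI subsetI)
    fix k assume "k \<in> \<Union>{c \<in> carrier E. c \<inter> U \<noteq> {}}"
    then obtain c u where c: "c \<in> carrier E" "k \<in> c" "u \<in> c" "u \<in> U" by blast
    have k: "k \<in> K" "c = KR #> k" using carrier_E_member[OF c(1,2)] by auto
    have kc: "k \<in> carrier G" "u \<in> carrier G" using k K_carrier c Uc by auto
    have "u \<otimes> inv k \<in> KR" using rcos_mem_iff[OF KR_subgroup] kc c k by simp
    then have n: "inv (u \<otimes> inv k) \<in> KR" using subgroup.m_inv_closed[OF KR_subgroup] by blast
    have "k = u \<otimes> inv (u \<otimes> inv k)" using kc by (simp add: inv_mult m_ac)
    then show "k \<in> K \<inter> (\<Union>n\<in>KR. U #> n)" unfolding r_coset_def using c k n by blast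
  next
    fix k assume "k \<in> K \<inter> (\<Union>n\<in>KR. U #> n)"
    then obtain n u where k: "k \<in> K" "n \<in> KR" "u \<in> U" "k = u \<otimes> n" unfolding r_coset_def by blast
    have c: "n \<in> carrier G" "u \<in> carrier G" using k K_carrier Uc by auto
    have "u = inv n \<otimes> k" using k c by (simp add: m_ac conj_cancel')
    then have "u \<in> KR #> k"
      unfolding r_coset_def using k subgroup.m_inv_closed[OF KR_subgroup] by blast
    moreover have "KR #> k \<in> carrier E" "k \<in> KR #> k"
      using k carrier_E rcos_self[OF _ KR_subgroup] K_carrier by auto
    ultimately show "k \<in> \<Union>{c \<in> carrier E. c \<inter> U \<noteq> {}}" using k by blast
  qed
  moreover have "openin (subtopology T K) (K \<inter> (\<Union>n\<in>KR. U #> n))"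
    using openin_rcoset[OF U] K_carrier by (intro openin_subtopology_Int2 openin_Union) auto
  ultimately show ?thesis unfolding openin_TE by auto
qed

lemma openin_TE_avoiding:
  assumes S: "closedin T S" and invariant: "\<And>s n. s \<in> S \<Longrightarrow> n \<in> KR \<Longrightarrow> s \<otimes> n \<in> S"
  shows "openin TE {c \<in> carrier E. c \<inter> S = {}}"
proof -
  have "\<Union>{c \<in> carrier E. c \<inter> S = {}} = K \<inter> (topspace T - S)"
  proof (intro equalityI subsetI)
    fix k assume "k \<in> \<Union>{c \<in> carrier E. c \<inter> S = {}}"
    then obtain c where c: "c \<in> carrier E" "k \<in> c" "c \<inter> S = {}" by blast
    then show "k \<in> K \<inter> (topspace T - S)" using carrier_E_member(2)[OF c(1,2)] K_carrier topspace_eq by auto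
  next
    fix k assume k: "k \<in> K \<inter> (topspace T - S)"
    have kc: "k \<in> carrier G" using k K_carrier by auto
    have "(KR #> k) \<inter> S = {}"
    proof (rule ccontr)
      assume "(KR #> k) \<inter> S \<noteq> {}"
      then obtain n where n: "n \<in> KR" "n \<otimes> k \<in> S" unfolding r_coset_def by blast
      then have "n \<otimes> k \<otimes> inv n \<in> S"
        using invariant subgroup.m_inv_closed[OF KR_subgroup] by blast
      then show False using k kc n K_carrier conj_cancel by auto
    qed
    moreover have "KR #> k \<in> carrier E" "k \<in> KR #> k"
      using k carrier_E rcos_self[OF kc KR_subgroup] by auto
    ultimately show "k \<in> \<Union>{c \<in> carrier E. c \<inter> S = {}}" by blast
  qed
  moreover have "openin (subtopology T K) (K \<inter> (topspace T - S))"
    using S by (intro openin_subtopology_Int2) (simp add: openin_diff)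
  ultimately show ?thesis unfolding openin_TE by auto
qed

lemma continuous_map_KR_coset: "continuous_map (subtopology T K) TE (\<lambda>k. KR #> k)"
  unfolding continuous_map_def
proof (intro conjI allI impI)
  show "(\<lambda>k. KR #> k) \<in> topspace (subtopology T K) \<rightarrow> topspace TE"
    using topspace_TE carrier_E topspace_eq K_carrier by auto
next
  fix U assume U: "openin TE U"
  have "{x \<in> topspace (subtopology T K). KR #> x \<in> U} = \<Union>U"
  proof (intro equalityI subsetI)
    fix k assume "k \<in> {x \<in> topspace (subtopology T K). KR #> x \<in> U}"
    then show "k \<in> \<Union>U" using rcos_self[OF _ KR_subgroup] topspace_eq by auto
  next
    fix k assume "k \<in> \<Union>U"
    then obtain c where "c \<in> U" "k \<in> c" by blast
    moreover have "c \<in> carrier E" using \<open>c \<in> U\<close> U openin_TE by auto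
    ultimately show "k \<in> {x \<in> topspace (subtopology T K). KR #> x \<in> U}"
      using carrier_E_member topspace_eq K_carrier by auto
  qed
  then show "openin (subtopology T K) {x \<in> topspace (subtopology T K). KR #> x \<in> U}"
    using U openin_TE by simp
qed

text \<open>E is compact, being a continuous image of K.\<close>
lemma compact_TE: "compact_space TE"
proof -
  have "compactin (subtopology T K) K" using K_compact by (simp add: compactin_subtopology)
  from image_compactin[OF this continuous_map_KR_coset]
  show ?thesis unfolding compact_space_def using topspace_TE carrier_E by simp
qed

lemma topspace_Maps: "topspace Maps = (\<Pi>\<^sub>E d\<in>carrier D. carrier E)"
  using topspace_TE by simp

lemma D_mult_closed:
  assumes "x \<in> carrier D" "y \<in> carrier D" shows "x <#> y \<in> carrier D"
proof -
  obtain a b where ab: "a \<in> M\<Omega>" "b \<in> M\<Omega>" "x = \<Omega> #> a" "y = \<Omega> #> b"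
    using assms carrier_D by auto
  then have "a \<in> carrier G" "b \<in> carrier G" using subgroup.subset[OF M\<Omega>_subgroup] by auto
  then have "x <#> y = \<Omega> #> (a \<otimes> b)" using ab rcos_mult_\<Omega> by simp
  moreover have "a \<otimes> b \<in> M\<Omega>" using ab subgroup.m_closed[OF M\<Omega>_subgroup] by auto
  ultimately show ?thesis using carrier_D by auto
qed

text \<open>Because D is discrete, Hom consists of all multiplicative points of the product.\<close>
lemma Hom_eq: "Hom = {f \<in> topspace Maps. \<forall>x\<in>carrier D. \<forall>y\<in>carrier D. f (x <#> y) = f x <#> f y}"
proof (intro equalityI subsetI)
  fix f assume "f \<in> Hom"
  then show "f \<in> {f \<in> topspace Maps. \<forall>x\<in>carrier D. \<forall>y\<in>carrier D. f (x <#> y) = f x <#> f y}"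
    unfolding cont_homs_def hom_def topspace_Maps by (auto simp: PiE_def)
next
  fix f assume f: "f \<in> {f \<in> topspace Maps. \<forall>x\<in>carrier D. \<forall>y\<in>carrier D. f (x <#> y) = f x <#> f y}"
  then have fe: "f \<in> extensional (carrier D)" and fpi: "f \<in> carrier D \<rightarrow> carrier E"
    using topspace_Maps by (auto simp: PiE_def)
  have "continuous_map TD TE f"
    unfolding continuous_map_def using fpi topspace_TD topspace_TE openin_TD by auto
  then show "f \<in> Hom" unfolding cont_homs_def hom_def using f fe fpi by auto
qed

lemma topspace_PT: "topspace PT = Hom"
  unfolding pointwise_hom_topology_def using Hom_eq by auto

lemma openin_Maps_eval:
  assumes "d \<in> carrier D" "openin TE V" shows "openin Maps {f \<in> topspace Maps. f d \<in> V}"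
  using openin_continuous_map_preimage[OF continuous_map_product_projection[OF assms(1)] assms(2)] .

lemma openin_PT_Int: "openin Maps V \<Longrightarrow> openin PT (Hom \<inter> V)"
  unfolding pointwise_hom_topology_def by (rule openin_subtopology_Int2)

text \<open>A non-multiplicative point of the product has a neighbourhood free of homomorphisms:
  choose representatives k1, k2, k3 of f x, f y, f (x y) and separate the triple quotient from
  the closed set KR.\<close>
lemma non_hom_neighbourhood:
  assumes f: "f \<in> topspace Maps" and xy: "x \<in> carrier D" "y \<in> carrier D"
    and ne: "f (x <#> y) \<noteq> f x <#> f y"
  obtains V where "openin Maps V" "f \<in> V" "V \<inter> Hom = {}"
proof -
  have xyD: "x <#> y \<in> carrier D" using D_mult_closed xy by auto
  have fE: "f x \<in> carrier E" "f y \<in> carrier E" "f (x <#> y) \<in> carrier E"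
    using f xy xyD topspace_Maps by auto
  obtain k1 k2 k3 where k: "k1 \<in> f x" "k2 \<in> f y" "k3 \<in> f (x <#> y)"
    using carrier_E_elem fE by metis
  have kc: "k1 \<in> carrier G" "k2 \<in> carrier G" "k3 \<in> carrier G"
    using carrier_E_member(2) fE k K_carrier by blast+
  have "k1 \<otimes> k2 \<otimes> inv k3 \<notin> KR" using E_mult_eq_iff[OF fE k] ne by simp
  then obtain U1 U2 U3 where U: "openin T U1" "openin T U2" "openin T U3" "k1 \<in> U1" "k2 \<in> U2" "k3 \<in> U3"
    "\<forall>u1\<in>U1. \<forall>u2\<in>U2. \<forall>u3\<in>U3. u1 \<otimes> u2 \<otimes> inv u3 \<notin> KR"
    using triple_quotient_avoids_closed[OF KR_closed kc] by blast
  define V where "V = {g \<in> topspace Maps. g x \<in> {c \<in> carrier E. c \<inter> U1 \<noteq> {}}} \<inter>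
      {g \<in> topspace Maps. g y \<in> {c \<in> carrier E. c \<inter> U2 \<noteq> {}}} \<inter>
      {g \<in> topspace Maps. g (x <#> y) \<in> {c \<in> carrier E. c \<inter> U3 \<noteq> {}}}"
  show ?thesis
  proof (rule that)
    show "openin Maps V" unfolding V_def
      using openin_Maps_eval[OF xy(1) openin_TE_meeting[OF U(1)]]
        openin_Maps_eval[OF xy(2) openin_TE_meeting[OF U(2)]]
        openin_Maps_eval[OF xyD openin_TE_meeting[OF U(3)]]
      by (intro openin_Int)
    show "f \<in> V" unfolding V_def using f fE k U(4-6) by blast
    show "V \<inter> Hom = {}"
    proof (rule ccontr)
      assume "V \<inter> Hom \<noteq> {}"
      then obtain g where g: "g \<in> V" "g \<in> Hom" by blast
      then obtain u1 u2 u3 where u: "u1 \<in> g x" "u1 \<in> U1" "u2 \<in> g y" "u2 \<in> U2"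
        "u3 \<in> g (x <#> y)" "u3 \<in> U3" and gE: "g x \<in> carrier E" "g y \<in> carrier E" "g (x <#> y) \<in> carrier E"
        unfolding V_def by blast
      have "g (x <#> y) = g x <#> g y" using g(2) Hom_eq xy by blast
      then show False using E_mult_eq_iff[OF gE u(1,3,5)] U(7) u by blast
    qed
  qed
qed

lemma closedin_Hom: "closedin Maps Hom"
  unfolding closedin_def
proof
  show "Hom \<subseteq> topspace Maps" using Hom_eq by blast
  show "openin Maps (topspace Maps - Hom)"
  proof (rule openin_subopen[THEN iffD2], intro ballI)
    fix f assume f: "f \<in> topspace Maps - Hom"
    then have fM: "f \<in> topspace Maps" by blast
    obtain x y where xy: "x \<in> carrier D" "y \<in> carrier D" "f (x <#> y) \<noteq> f x <#> f y"
      using f Hom_eq by blast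
    obtain V where "openin Maps V" "f \<in> V" "V \<inter> Hom = {}"
      by (rule non_hom_neighbourhood[OF fM xy])
    then show "\<exists>V. openin Maps V \<and> f \<in> V \<and> V \<subseteq> topspace Maps - Hom"
      using openin_subset by blast
  qed
qed

text \<open>First assertion of the proposition: the homomorphism space is compact (Tychonoff).\<close>
lemma compact_PT: "compact_space PT"
proof -
  have "compact_space Maps" using compact_TE by (simp add: compact_space_product_topology)
  then have "compactin Maps Hom" using closedin_Hom closedin_compact_space by blast
  then show ?thesis unfolding pointwise_hom_topology_def by (rule compact_space_subtopology)
qed

lemma K_rcos_eq_iff:
  assumes "x \<in> carrier G" "y \<in> carrier G"
  shows "K #> x = K #> y \<longleftrightarrow> (\<exists>k\<in>K. x = y \<otimes> k)"
proof -
  have "K #> x = K #> y \<longleftrightarrow> x \<otimes> inv y \<in> K" using rcos_eq_iff[OF K_subgroup] assms .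
  also have "\<dots> \<longleftrightarrow> (\<exists>k\<in>K. x = y \<otimes> k)"
    using assms K_carrier conj_cancel by (auto simp: m_ac intro!: bexI[of _ "x \<otimes> inv y"])
  finally show ?thesis .
qed

lemma mult_K_mem_M_iff:
  assumes k: "k \<in> K" and y: "y \<in> carrier G"
  shows "y \<otimes> k \<in> M \<longleftrightarrow> y \<in> M"
proof
  have km: "k \<in> M" "inv k \<in> M" using k K_M subgroup.m_inv_closed[OF M_subgroup] by auto
  assume "y \<otimes> k \<in> M"
  then have "y \<otimes> k \<otimes> inv k \<in> M" using km subgroup.m_closed[OF M_subgroup] by blast
  then show "y \<in> M" using k y K_carrier by (auto simp: m_assoc)
next
  assume "y \<in> M" then show "y \<otimes> k \<in> M" using k K_M subgroup.m_closed[OF M_subgroup] by blast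
qed

lemma rcosets_eq_iff:
  assumes H: "subgroup H G"
  shows "(\<lambda>h. K #> h) ` H = (\<lambda>m. K #> m) ` M \<longleftrightarrow> H \<subseteq> M \<and> (\<forall>m\<in>M. \<exists>h\<in>H. \<exists>k\<in>K. m = h \<otimes> k)"
proof -
  have Hc: "H \<subseteq> carrier G" using subgroup.subset[OF H] .
  show ?thesis
  proof
    assume eq: "(\<lambda>h. K #> h) ` H = (\<lambda>m. K #> m) ` M"
    have "H \<subseteq> M"
    proof
      fix h assume h: "h \<in> H"
      have "K #> h \<in> (\<lambda>m. K #> m) ` M" using eq h by (metis image_eqI)
      then obtain m where m: "m \<in> M" "K #> h = K #> m" by blast
      then obtain k where k: "k \<in> K" "h = m \<otimes> k" using K_rcos_eq_iff Hc M_carrier h by blast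
      then show "h \<in> M" using mult_K_mem_M_iff[OF k(1), of m] m M_carrier by auto
    qed
    moreover have "\<forall>m\<in>M. \<exists>h\<in>H. \<exists>k\<in>K. m = h \<otimes> k"
    proof
      fix m assume m: "m \<in> M"
      have "K #> m \<in> (\<lambda>h. K #> h) ` H" using eq m by (metis image_eqI)
      then obtain h where "h \<in> H" "K #> m = K #> h" by blast
      then show "\<exists>h\<in>H. \<exists>k\<in>K. m = h \<otimes> k" using K_rcos_eq_iff m M_carrier Hc by blast
    qed
    ultimately show "H \<subseteq> M \<and> (\<forall>m\<in>M. \<exists>h\<in>H. \<exists>k\<in>K. m = h \<otimes> k)" ..
  next
    assume A: "H \<subseteq> M \<and> (\<forall>m\<in>M. \<exists>h\<in>H. \<exists>k\<in>K. m = h \<otimes> k)"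
    show "(\<lambda>h. K #> h) ` H = (\<lambda>m. K #> m) ` M"
    proof
      show "(\<lambda>h. K #> h) ` H \<subseteq> (\<lambda>m. K #> m) ` M" using A by blast
      show "(\<lambda>m. K #> m) ` M \<subseteq> (\<lambda>h. K #> h) ` H"
      proof
        fix c assume "c \<in> (\<lambda>m. K #> m) ` M"
        then obtain m where m: "m \<in> M" "c = K #> m" by blast
        then obtain h k where hk: "h \<in> H" "k \<in> K" "m = h \<otimes> k" using A by blast
        then have "K #> m = K #> h" using K_rcos_eq_iff m M_carrier Hc by blast
        then show "c \<in> (\<lambda>h. K #> h) ` H" using m hk(1) by blast
      qed
    qed
  qed
qed

end

section \<open>Parametrising a nonempty fiber by the homomorphism space\<close>

text \<open>A base point H0 of the fiber, with the fiber condition unfolded as in rcosets_eq_iff.\<close>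
locale fiber_base = fiber_setting +
  fixes H0 :: "'a set"
  assumes H0_subgroup: "subgroup H0 G" and H0_\<Omega>: "H0 \<inter> \<Omega> = R"
    and H0_M: "H0 \<subseteq> M" and H0_cover: "\<And>m. m \<in> M \<Longrightarrow> \<exists>h\<in>H0. \<exists>k\<in>K. m = h \<otimes> k"
begin

definition Psi :: "('a set \<Rightarrow> 'a set) \<Rightarrow> 'a set" where
  "Psi \<phi> = {x. \<exists>h\<in>H0. \<exists>k. k \<in> \<phi> (\<Omega> #> h) \<and> x = h \<otimes> k}"

definition Phi :: "'a set \<Rightarrow> 'a set \<Rightarrow> 'a set" where
  "Phi H = (\<lambda>d\<in>carrier D. {k \<in> K. \<exists>h\<in>H0. h \<in> d \<and> h \<otimes> k \<in> H})"

lemma H0_carrier: "H0 \<subseteq> carrier G" using subgroup.subset[OF H0_subgroup] .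

lemma carrier_D_H0: "carrier D = (\<lambda>h. \<Omega> #> h) ` H0"
proof
  have "H0 \<subseteq> M\<Omega>"
    using H0_M H0_carrier subgroup.one_closed[OF \<Omega>_subgroup] unfolding set_mult_def by force
  then show "(\<lambda>h. \<Omega> #> h) ` H0 \<subseteq> carrier D" using carrier_D by auto
  show "carrier D \<subseteq> (\<lambda>h. \<Omega> #> h) ` H0"
  proof
    fix d assume "d \<in> carrier D"
    then obtain m w where mw: "m \<in> M" "w \<in> \<Omega>" "d = \<Omega> #> (m \<otimes> w)"
      using carrier_D unfolding set_mult_def by auto
    then obtain h k where hk: "h \<in> H0" "k \<in> K" "m = h \<otimes> k" using H0_cover by blast
    have c: "h \<in> carrier G" "k \<in> carrier G" "w \<in> carrier G"
      using hk mw H0_carrier K_carrier \<Omega>_carrier by auto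
    have mwc: "m \<otimes> w \<in> carrier G" using hk(3) c by simp
    have "m \<otimes> w \<otimes> inv h = k \<otimes> w" using hk c conj_cancel[of h "k \<otimes> w"] by (simp add: m_assoc)
    moreover have "k \<otimes> w \<in> \<Omega>" using hk mw K_\<Omega> subgroup.m_closed[OF \<Omega>_subgroup] by auto
    ultimately have "d = \<Omega> #> h" using rcos_eq_iff[OF \<Omega>_subgroup mwc c(1)] mw(3) by simp
    then show "d \<in> (\<lambda>h. \<Omega> #> h) ` H0" using hk by blast
  qed
qed

lemma \<Omega>_rcos_H0_eq_iff:
  assumes "h \<in> H0" "h' \<in> H0"
  shows "\<Omega> #> h' = \<Omega> #> h \<longleftrightarrow> h' \<otimes> inv h \<in> R"
proof -
  have "h' \<otimes> inv h \<in> H0" using assms subgroup.m_closed[OF H0_subgroup] subgroup.m_inv_closed[OF H0_subgroup] by auto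
  then show ?thesis using rcos_eq_iff[OF \<Omega>_subgroup] assms H0_carrier H0_\<Omega> by auto
qed

context
  fixes \<phi> assumes \<phi>: "\<phi> \<in> Hom"
begin

lemma \<phi>_carrier: "h \<in> H0 \<Longrightarrow> \<phi> (\<Omega> #> h) \<in> carrier E"
  using \<phi> Hom_eq topspace_Maps carrier_D_H0 by auto

lemma \<phi>_subset_K: "h \<in> H0 \<Longrightarrow> \<phi> (\<Omega> #> h) \<subseteq> K"
  using carrier_E_member(2) \<phi>_carrier by blast

lemma \<phi>_mult:
  assumes "a \<in> H0" "b \<in> H0" shows "\<phi> (\<Omega> #> (a \<otimes> b)) = \<phi> (\<Omega> #> a) <#> \<phi> (\<Omega> #> b)"
proof -
  have "\<Omega> #> a \<in> carrier D" "\<Omega> #> b \<in> carrier D" using assms carrier_D_H0 by auto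
  then have "\<phi> ((\<Omega> #> a) <#> (\<Omega> #> b)) = \<phi> (\<Omega> #> a) <#> \<phi> (\<Omega> #> b)" using \<phi> Hom_eq by blast
  moreover have "(\<Omega> #> a) <#> (\<Omega> #> b) = \<Omega> #> (a \<otimes> b)" using rcos_mult_\<Omega> assms H0_carrier by auto
  ultimately show ?thesis by simp
qed

lemma \<phi>_one: "\<phi> \<Omega> = KR"
proof -
  have \<Omega>1: "\<Omega> #> \<one> = \<Omega>" using \<Omega>_carrier by simp
  have one: "\<one> \<in> H0" using subgroup.one_closed[OF H0_subgroup] .
  have E: "\<phi> \<Omega> \<in> carrier E" using \<phi>_carrier[OF one] \<Omega>1 by simp
  then obtain k where k: "k \<in> K" "k \<in> \<phi> \<Omega>" "\<phi> \<Omega> = KR #> k" by (rule carrier_E_elem)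
  have kc: "k \<in> carrier G" using k(1) K_carrier by blast
  have "\<phi> \<Omega> = \<phi> \<Omega> <#> \<phi> \<Omega>" using \<phi>_mult[OF one one] \<Omega>1 by simp
  then have "k \<otimes> k \<otimes> inv k \<in> KR" using E_mult_eq_iff[OF E E E k(2) k(2) k(2)] by simp
  then have "k \<in> KR" using kc by (simp add: m_assoc)
  then show ?thesis using k(3) coset_join2[OF kc KR_subgroup] by simp
qed

lemma \<phi>_inv:
  assumes h: "h \<in> H0" and k: "k \<in> \<phi> (\<Omega> #> h)"
  shows "inv k \<in> \<phi> (\<Omega> #> inv h)"
proof -
  have ih: "inv h \<in> H0" using h subgroup.m_inv_closed[OF H0_subgroup] by blast
  obtain j where j: "j \<in> K" "j \<in> \<phi> (\<Omega> #> inv h)" "\<phi> (\<Omega> #> inv h) = KR #> j"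
    using carrier_E_elem[OF \<phi>_carrier[OF ih]] by blast
  have kc: "k \<in> carrier G" "j \<in> carrier G" using \<phi>_subset_K[OF h] k j K_carrier by auto
  have hc: "h \<in> carrier G" using h H0_carrier by blast
  have E1: "\<phi> \<Omega> \<in> carrier E"
    using \<phi>_carrier[OF subgroup.one_closed[OF H0_subgroup]] \<Omega>_carrier by simp
  have one: "\<one> \<in> \<phi> \<Omega>" using \<phi>_one subgroup.one_closed[OF KR_subgroup] by simp
  have "\<phi> (\<Omega> #> (h \<otimes> inv h)) = \<phi> \<Omega>" using hc \<Omega>_carrier by simp
  then have "\<phi> \<Omega> = \<phi> (\<Omega> #> h) <#> \<phi> (\<Omega> #> inv h)" using \<phi>_mult[OF h ih] by simp
  then have "k \<otimes> j \<otimes> inv \<one> \<in> KR"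
    using E_mult_eq_iff[OF \<phi>_carrier[OF h] \<phi>_carrier[OF ih] E1 k j(2) one] by blast
  then have "inv (k \<otimes> j) \<in> KR" using kc subgroup.m_inv_closed[OF KR_subgroup] by simp
  then have "inv k \<otimes> inv j \<in> KR" using kc by (simp add: inv_mult m_comm)
  then show ?thesis using rcos_mem_iff[OF KR_subgroup] kc j by simp
qed

lemma \<phi>_value: "h \<in> H0 \<Longrightarrow> k \<in> \<phi> (\<Omega> #> h) \<Longrightarrow> \<phi> (\<Omega> #> h) = KR #> k"
  using carrier_E_member(1) \<phi>_carrier by blast

lemma Psi_elem:
  assumes "x \<in> Psi \<phi>" obtains h k where "h \<in> H0" "k \<in> K" "k \<in> \<phi> (\<Omega> #> h)" "x = h \<otimes> k"
  using assms \<phi>_subset_K unfolding Psi_def by blast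

text \<open>The factorisation x = h k, h \<in> H0, k \<in> K, of an element of \<Psi> \<phi> is essentially unique,
  so membership can be read off at any representative h.\<close>
lemma mem_Psi:
  assumes h: "h \<in> H0" and k: "k \<in> K"
  shows "h \<otimes> k \<in> Psi \<phi> \<longleftrightarrow> k \<in> \<phi> (\<Omega> #> h)"
proof
  assume "k \<in> \<phi> (\<Omega> #> h)" then show "h \<otimes> k \<in> Psi \<phi>" unfolding Psi_def using h by blast
next
  assume "h \<otimes> k \<in> Psi \<phi>"
  then obtain h' k' where hk: "h' \<in> H0" "k' \<in> K" "k' \<in> \<phi> (\<Omega> #> h')" "h \<otimes> k = h' \<otimes> k'"
    by (rule Psi_elem)
  have c: "h \<in> carrier G" "k \<in> carrier G" "h' \<in> carrier G" "k' \<in> carrier G"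
    using h k hk H0_carrier K_carrier by auto
  have eq: "h' \<otimes> inv h = k \<otimes> inv k'" using factorisations_quotient_eq[OF c hk(4)] .
  have "k \<otimes> inv k' \<in> K" using k hk subgroup.m_closed[OF K_subgroup] subgroup.m_inv_closed[OF K_subgroup] by auto
  moreover have "h' \<otimes> inv h \<in> H0" using h hk subgroup.m_closed[OF H0_subgroup] subgroup.m_inv_closed[OF H0_subgroup] by auto
  ultimately have r: "h' \<otimes> inv h \<in> KR" using eq H0_\<Omega> K_\<Omega> by auto
  then have "\<Omega> #> h' = \<Omega> #> h" using \<Omega>_rcos_H0_eq_iff[OF h hk(1)] by auto
  then have "\<phi> (\<Omega> #> h) = KR #> k'" using \<phi>_value hk by simp
  moreover have "k \<in> KR #> k'" using r eq rcos_mem_iff[OF KR_subgroup] c by simp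
  ultimately show "k \<in> \<phi> (\<Omega> #> h)" by simp
qed

lemma Psi_carrier: "Psi \<phi> \<subseteq> carrier G"
proof
  fix x assume "x \<in> Psi \<phi>"
  then obtain h k where "h \<in> H0" "k \<in> K" "k \<in> \<phi> (\<Omega> #> h)" "x = h \<otimes> k" by (rule Psi_elem)
  then show "x \<in> carrier G" using H0_carrier K_carrier by auto
qed

lemma Psi_subgroup: "subgroup (Psi \<phi>) G"
proof (rule subgroupI)
  show "Psi \<phi> \<subseteq> carrier G" using Psi_carrier .
  have "\<one> \<in> \<phi> (\<Omega> #> \<one>)" using \<phi>_one \<Omega>_carrier subgroup.one_closed[OF KR_subgroup] by simp
  then have "\<one> \<otimes> \<one> \<in> Psi \<phi>" unfolding Psi_def using subgroup.one_closed[OF H0_subgroup] by blast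
  then show "Psi \<phi> \<noteq> {}" by blast
next
  fix x assume "x \<in> Psi \<phi>"
  then obtain h k where hk: "h \<in> H0" "k \<in> K" "k \<in> \<phi> (\<Omega> #> h)" "x = h \<otimes> k" by (rule Psi_elem)
  have "h \<in> carrier G" "k \<in> carrier G" using hk H0_carrier K_carrier by auto
  then have "inv x = inv h \<otimes> inv k" using hk(4) by (simp add: inv_mult)
  then show "inv x \<in> Psi \<phi>"
    unfolding Psi_def using \<phi>_inv[OF hk(1,3)] hk(1) subgroup.m_inv_closed[OF H0_subgroup] by blast
next
  fix x y assume "x \<in> Psi \<phi>" "y \<in> Psi \<phi>"
  then obtain h k h' k' where hk: "h \<in> H0" "k \<in> K" "k \<in> \<phi> (\<Omega> #> h)" "x = h \<otimes> k"
    and hk': "h' \<in> H0" "k' \<in> K" "k' \<in> \<phi> (\<Omega> #> h')" "y = h' \<otimes> k'" by (metis Psi_elem)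
  have "h \<in> carrier G" "h' \<in> carrier G" "k \<in> carrier G" "k' \<in> carrier G"
    using hk hk' H0_carrier K_carrier by auto
  then have "x \<otimes> y = (h \<otimes> h') \<otimes> (k \<otimes> k')" using hk(4) hk'(4) by (simp add: m_ac)
  moreover have "k \<otimes> k' \<in> \<phi> (\<Omega> #> (h \<otimes> h'))"
    using hk hk' \<phi>_mult unfolding set_mult_def by blast
  ultimately show "x \<otimes> y \<in> Psi \<phi>"
    unfolding Psi_def using hk hk' subgroup.m_closed[OF H0_subgroup] by blast
qed

lemma Psi_\<Omega>: "Psi \<phi> \<inter> \<Omega> = R"
proof (intro equalityI subsetI)
  fix x assume x: "x \<in> Psi \<phi> \<inter> \<Omega>"
  then have "x \<in> Psi \<phi>" by blast
  then obtain h k where hk: "h \<in> H0" "k \<in> K" "k \<in> \<phi> (\<Omega> #> h)" "x = h \<otimes> k" by (rule Psi_elem)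
  have c: "h \<in> carrier G" "k \<in> carrier G" using hk H0_carrier K_carrier by auto
  have "x \<otimes> inv k \<in> \<Omega>"
    using x hk(2) K_\<Omega> subgroup.m_closed[OF \<Omega>_subgroup] subgroup.m_inv_closed[OF \<Omega>_subgroup] by blast
  moreover have "x \<otimes> inv k = h" using hk(4) c by (simp add: m_assoc)
  ultimately have "h \<in> \<Omega>" by simp
  then have hR: "h \<in> R" using hk H0_\<Omega> by blast
  then have "\<Omega> #> h = \<Omega>" using coset_join2[OF c(1) \<Omega>_subgroup] R_\<Omega> by blast
  then have "k \<in> R" using hk \<phi>_one by auto
  then show "x \<in> R" using hR hk subgroup.m_closed[OF R_subgroup] by blast
next
  fix r assume r: "r \<in> R"
  then have rc: "r \<in> carrier G" "r \<in> H0" using R_carrier H0_\<Omega> by auto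
  have "\<Omega> #> r = \<Omega>" using coset_join2[OF rc(1) \<Omega>_subgroup] r R_\<Omega> by blast
  then have "\<one> \<in> \<phi> (\<Omega> #> r)" using \<phi>_one subgroup.one_closed[OF KR_subgroup] by simp
  then have "r \<otimes> \<one> \<in> Psi \<phi>" unfolding Psi_def using rc by blast
  then show "r \<in> Psi \<phi> \<inter> \<Omega>" using r rc R_\<Omega> by auto
qed

lemma Psi_closed: "closedin T (Psi \<phi>)"
  using closedin_subgroup_by_open_subgroup[OF Psi_subgroup \<Omega>_subgroup \<Omega>_open] Psi_\<Omega> R_closed by simp

lemma Psi_M: "Psi \<phi> \<subseteq> M \<and> (\<forall>m\<in>M. \<exists>p\<in>Psi \<phi>. \<exists>k\<in>K. m = p \<otimes> k)"
proof
  show "Psi \<phi> \<subseteq> M"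
  proof
    fix x assume "x \<in> Psi \<phi>"
    then obtain h k where "h \<in> H0" "k \<in> K" "k \<in> \<phi> (\<Omega> #> h)" "x = h \<otimes> k" by (rule Psi_elem)
    then show "x \<in> M" using H0_M K_M subgroup.m_closed[OF M_subgroup] by auto
  qed
  show "\<forall>m\<in>M. \<exists>p\<in>Psi \<phi>. \<exists>k\<in>K. m = p \<otimes> k"
  proof
    fix m assume "m \<in> M"
    then obtain h k0 where hk: "h \<in> H0" "k0 \<in> K" "m = h \<otimes> k0" using H0_cover by blast
    obtain k1 where k1: "k1 \<in> K" "k1 \<in> \<phi> (\<Omega> #> h)" "\<phi> (\<Omega> #> h) = KR #> k1"
      by (rule carrier_E_elem[OF \<phi>_carrier[OF hk(1)]])
    have c: "h \<in> carrier G" "k0 \<in> carrier G" "k1 \<in> carrier G" using hk k1 H0_carrier K_carrier by auto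
    have "k1 \<otimes> (inv k1 \<otimes> k0) = k0" using c by (simp add: m_assoc[symmetric])
    then have "m = (h \<otimes> k1) \<otimes> (inv k1 \<otimes> k0)" using hk(3) c by (simp add: m_assoc)
    moreover have "h \<otimes> k1 \<in> Psi \<phi>" unfolding Psi_def using hk k1 by blast
    moreover have "inv k1 \<otimes> k0 \<in> K"
      using hk k1 subgroup.m_closed[OF K_subgroup] subgroup.m_inv_closed[OF K_subgroup] by auto
    ultimately show "\<exists>p\<in>Psi \<phi>. \<exists>k\<in>K. m = p \<otimes> k" by blast
  qed
qed

lemma Psi_in_fiber: "Psi \<phi> \<in> fiber"
  using Psi_subgroup Psi_closed Psi_\<Omega> Psi_M rcosets_eq_iff[OF Psi_subgroup]
  unfolding closed_subgroups_def by auto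

lemma \<phi>_from_Psi: "h \<in> H0 \<Longrightarrow> \<phi> (\<Omega> #> h) = {k \<in> K. h \<otimes> k \<in> Psi \<phi>}"
  using mem_Psi \<phi>_subset_K by auto

end

lemma Psi_inj: "inj_on Psi Hom"
proof (rule inj_onI)
  fix \<phi> \<psi> assume \<phi>: "\<phi> \<in> Hom" and \<psi>: "\<psi> \<in> Hom" and eq: "Psi \<phi> = Psi \<psi>"
  show "\<phi> = \<psi>"
  proof (rule extensionalityI)
    show "\<phi> \<in> extensional (carrier D)" "\<psi> \<in> extensional (carrier D)"
      using \<phi> \<psi> unfolding cont_homs_def by auto
    fix d assume "d \<in> carrier D"
    then obtain h where "h \<in> H0" "d = \<Omega> #> h" using carrier_D_H0 by auto
    then show "\<phi> d = \<psi> d" using \<phi>_from_Psi[OF \<phi>] \<phi>_from_Psi[OF \<psi>] eq by simp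
  qed
qed

context
  fixes H assumes H: "H \<in> fiber"
begin

lemma H_subgroup: "subgroup H G" and H_\<Omega>: "H \<inter> \<Omega> = R"
  and H_M: "H \<subseteq> M" and H_cover: "\<forall>m\<in>M. \<exists>p\<in>H. \<exists>k\<in>K. m = p \<otimes> k"
  using H rcosets_eq_iff unfolding closed_subgroups_def by auto

lemma H_carrier: "H \<subseteq> carrier G" using subgroup.subset[OF H_subgroup] .

text \<open>The value of \<Phi> H at \<Omega> h does not depend on the representative h \<in> H0, since two
  representatives differ by an element of R \<subseteq> H.\<close>
lemma Phi_at:
  assumes h: "h \<in> H0" shows "Phi H (\<Omega> #> h) = {k \<in> K. h \<otimes> k \<in> H}"
proof -
  have "h \<otimes> k \<in> H" if k: "k \<in> K" and h': "h' \<in> H0" "h' \<in> \<Omega> #> h" "h' \<otimes> k \<in> H" for h' k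
  proof -
    have c: "h \<in> carrier G" "h' \<in> carrier G" "k \<in> carrier G" using h h' k H0_carrier K_carrier by auto
    have "\<Omega> #> h' = \<Omega> #> h" using rcos_same[OF \<Omega>_subgroup] c h' by blast
    then have "h' \<otimes> inv h \<in> H" using \<Omega>_rcos_H0_eq_iff[OF h h'(1)] H_\<Omega> by blast
    then have "inv (h' \<otimes> inv h) \<otimes> (h' \<otimes> k) \<in> H"
      using h' subgroup.m_closed[OF H_subgroup] subgroup.m_inv_closed[OF H_subgroup] by blast
    moreover have "inv (h' \<otimes> inv h) \<otimes> (h' \<otimes> k) = h \<otimes> k" using c by (simp add: inv_mult m_ac conj_cancel')
    ultimately show ?thesis by simp
  qed
  moreover have "\<Omega> #> h \<in> carrier D" "h \<in> \<Omega> #> h"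
    using h carrier_D_H0 rcos_self[OF _ \<Omega>_subgroup] H0_carrier by auto
  ultimately show ?thesis unfolding Phi_def using h by auto
qed

lemma H0_corrected_into_H: "h \<in> H0 \<Longrightarrow> \<exists>k\<in>K. h \<otimes> k \<in> H"
proof -
  assume "h \<in> H0"
  then obtain p k0 where pk: "p \<in> H" "k0 \<in> K" "h = p \<otimes> k0" using H_cover H0_M by blast
  then have "p \<in> carrier G" "k0 \<in> carrier G" using H_carrier K_carrier by auto
  then have "h \<otimes> inv k0 \<in> H" using pk by (simp add: m_assoc)
  moreover have "inv k0 \<in> K" using pk(2) subgroup.m_inv_closed[OF K_subgroup] by blast
  ultimately show ?thesis by blast
qed

lemma corrections_coset:
  assumes h: "h \<in> H0" and k: "k \<in> K" "h \<otimes> k \<in> H"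
  shows "{k' \<in> K. h \<otimes> k' \<in> H} = KR #> k"
proof (intro equalityI subsetI)
  have hc: "h \<in> carrier G" and kc: "k \<in> carrier G" using h k H0_carrier K_carrier by auto
  fix k' assume k': "k' \<in> {k' \<in> K. h \<otimes> k' \<in> H}"
  have k'c: "k' \<in> carrier G" using k' K_carrier by auto
  have "h \<otimes> k' \<otimes> inv (h \<otimes> k) = k' \<otimes> inv k" by (rule quotient_common_factor[OF hc k'c kc])
  moreover have "h \<otimes> k' \<otimes> inv (h \<otimes> k) \<in> H"
    using k k' subgroup.m_closed[OF H_subgroup] subgroup.m_inv_closed[OF H_subgroup] by auto
  moreover have "k' \<otimes> inv k \<in> K" using k k' subgroup.m_closed[OF K_subgroup] subgroup.m_inv_closed[OF K_subgroup] by auto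
  ultimately have "k' \<otimes> inv k \<in> KR" using H_\<Omega> K_\<Omega> by auto
  then show "k' \<in> KR #> k" using rcos_mem_iff[OF KR_subgroup kc k'c] by simp
next
  fix k' assume "k' \<in> KR #> k"
  then obtain n where n: "n \<in> KR" "k' = n \<otimes> k" unfolding r_coset_def by blast
  have "n \<in> carrier G" "h \<in> carrier G" "k \<in> carrier G" using n h k H0_carrier K_carrier by auto
  then have "h \<otimes> k' = n \<otimes> (h \<otimes> k)" using n(2) by (simp add: m_ac)
  moreover have "n \<in> H" using n H_\<Omega> by auto
  ultimately show "k' \<in> {k' \<in> K. h \<otimes> k' \<in> H}"
    using n k subgroup.m_closed[OF K_subgroup] subgroup.m_closed[OF H_subgroup] by auto
qed

lemma Phi_value:
  assumes h: "h \<in> H0" shows "\<exists>k\<in>K. Phi H (\<Omega> #> h) = KR #> k \<and> h \<otimes> k \<in> H"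
proof -
  obtain k where "k \<in> K" "h \<otimes> k \<in> H" using H0_corrected_into_H[OF h] by blast
  then show ?thesis using Phi_at[OF h] corrections_coset[OF h] by auto
qed

lemma Phi_Hom: "Phi H \<in> Hom"
proof -
  have "Phi H d \<in> carrier E" if d: "d \<in> carrier D" for d
  proof -
    obtain h where "h \<in> H0" "d = \<Omega> #> h" using d carrier_D_H0 by auto
    then obtain k where "k \<in> K" "Phi H d = KR #> k" using Phi_value by blast
    then show ?thesis using carrier_E by auto
  qed
  moreover have "Phi H \<in> extensional (carrier D)" unfolding Phi_def by simp
  ultimately have "Phi H \<in> topspace Maps" unfolding topspace_Maps PiE_def by blast
  moreover have "Phi H (x <#> y) = Phi H x <#> Phi H y" if xy: "x \<in> carrier D" "y \<in> carrier D" for x y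
  proof -
    obtain a b where ab: "a \<in> H0" "b \<in> H0" "x = \<Omega> #> a" "y = \<Omega> #> b"
      using xy carrier_D_H0 by auto
    obtain ka where ka: "ka \<in> K" "Phi H (\<Omega> #> a) = KR #> ka" "a \<otimes> ka \<in> H" using Phi_value ab by blast
    obtain kb where kb: "kb \<in> K" "Phi H (\<Omega> #> b) = KR #> kb" "b \<otimes> kb \<in> H" using Phi_value ab by blast
    have c: "a \<in> carrier G" "b \<in> carrier G" "ka \<in> carrier G" "kb \<in> carrier G"
      using ab ka kb H0_carrier K_carrier by auto
    have abH: "a \<otimes> b \<in> H0" using ab subgroup.m_closed[OF H0_subgroup] by auto
    have kk: "ka \<otimes> kb \<in> K" using ka kb subgroup.m_closed[OF K_subgroup] by auto
    have "(a \<otimes> b) \<otimes> (ka \<otimes> kb) = (a \<otimes> ka) \<otimes> (b \<otimes> kb)" using c by (simp add: m_ac)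
    then have "(a \<otimes> b) \<otimes> (ka \<otimes> kb) \<in> H" using ka kb subgroup.m_closed[OF H_subgroup] by simp
    then have "Phi H (\<Omega> #> (a \<otimes> b)) = KR #> (ka \<otimes> kb)"
      using Phi_at[OF abH] corrections_coset[OF abH kk] by simp
    then show ?thesis using ab ka kb c rcos_mult_\<Omega> rcos_mult_KR by simp
  qed
  ultimately show ?thesis using Hom_eq by blast
qed

lemma Psi_Phi: "Psi (Phi H) = H"
proof (intro equalityI subsetI)
  fix x assume "x \<in> Psi (Phi H)"
  then show "x \<in> H" using Phi_at unfolding Psi_def by auto
next
  fix x assume x: "x \<in> H"
  then obtain h k where hk: "h \<in> H0" "k \<in> K" "x = h \<otimes> k" using H_M H0_cover by blast
  then have "k \<in> Phi H (\<Omega> #> h)" using Phi_at x by auto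
  then show "x \<in> Psi (Phi H)" unfolding Psi_def using hk by blast
qed

end

lemma Psi_image: "Psi ` Hom = fiber"
proof
  show "Psi ` Hom \<subseteq> fiber" by (intro image_subsetI Psi_in_fiber)
  show "fiber \<subseteq> Psi ` Hom"
  proof
    fix H assume H: "H \<in> fiber"
    show "H \<in> Psi ` Hom" by (rule image_eqI[of H Psi "Phi H"]) (simp_all add: Psi_Phi[OF H] Phi_Hom[OF H])
  qed
qed

subsection \<open>Continuity of \<Psi>\<close>

text \<open>\<Psi> \<phi> meets U iff \<phi>(\<Omega> h) meets U h\<inverse> for some h \<in> H0; the latter is an open condition.\<close>
lemma openin_PT_meeting:
  assumes U: "openin T U"
  shows "openin PT {\<phi> \<in> topspace PT. Psi \<phi> \<inter> U \<noteq> {}}"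
proof -
  have Uc: "U \<subseteq> carrier G" using openin_subset[OF U] topspace_eq by simp
  define V where "V = (\<Union>h\<in>H0. {f \<in> topspace Maps. f (\<Omega> #> h) \<in> {c \<in> carrier E. c \<inter> (U #> inv h) \<noteq> {}}})"
  have "openin Maps {f \<in> topspace Maps. f (\<Omega> #> h) \<in> {c \<in> carrier E. c \<inter> (U #> inv h) \<noteq> {}}}"
    if h: "h \<in> H0" for h
  proof -
    have "\<Omega> #> h \<in> carrier D" "openin T (U #> inv h)"
      using h carrier_D_H0 openin_rcoset[OF U] H0_carrier by auto
    then show ?thesis by (rule openin_Maps_eval[OF _ openin_TE_meeting])
  qed
  then have V: "openin Maps V" unfolding V_def by (intro openin_Union) blast
  have iff: "Psi \<phi> \<inter> U \<noteq> {} \<longleftrightarrow> \<phi> \<in> V" if \<phi>: "\<phi> \<in> Hom" for \<phi>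
  proof -
    have "h \<otimes> k \<in> U \<longleftrightarrow> k \<in> U #> inv h" if "h \<in> H0" "k \<in> K" for h k
    proof -
      have c: "h \<in> carrier G" "k \<in> carrier G" using that H0_carrier K_carrier by auto
      then show ?thesis using rcoset_eq_preimage[OF Uc inv_closed[OF c(1)]] topspace_eq by (simp add: m_comm)
    qed
    then have "Psi \<phi> \<inter> U \<noteq> {} \<longleftrightarrow> (\<exists>h\<in>H0. \<phi> (\<Omega> #> h) \<inter> (U #> inv h) \<noteq> {})"
      using \<phi>_subset_K[OF \<phi>] unfolding Psi_def by blast
    then show ?thesis unfolding V_def using \<phi> Hom_eq \<phi>_carrier by auto
  qed
  then have "{\<phi> \<in> topspace PT. Psi \<phi> \<inter> U \<noteq> {}} = Hom \<inter> V" using topspace_PT by blast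
  then show ?thesis using openin_PT_Int[OF V] by simp
qed

text \<open>The part of K lying in (C R) h\<inverse>: \<Psi> \<phi> avoids C inside the coset \<Omega> h exactly when
  \<phi>(\<Omega> h) avoids this set.\<close>
definition avoid_set :: "'a set \<Rightarrow> 'a \<Rightarrow> 'a set" where
  "avoid_set C h = K \<inter> ((C <#> R) #> inv h)"

lemma openin_TE_avoid_set:
  assumes C: "compactin T C" and h: "h \<in> carrier G"
  shows "openin TE {e \<in> carrier E. e \<inter> avoid_set C h = {}}"
proof (rule openin_TE_avoiding)
  show "closedin T (avoid_set C h)"
    using closedin_rcoset[OF closedin_compact_set_mult[OF C R_closed]] h K_closed
    unfolding avoid_set_def by blast
  have Cc: "C \<subseteq> carrier G" using compactin_subset_topspace[OF C] topspace_eq by simp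
  fix s n assume s: "s \<in> avoid_set C h" and n: "n \<in> KR"
  then obtain c r where cr: "c \<in> C" "r \<in> R" "s = c \<otimes> r \<otimes> inv h" "s \<in> K"
    unfolding avoid_set_def r_coset_def set_mult_def by blast
  have "c \<in> carrier G" "r \<in> carrier G" "n \<in> carrier G" using cr n Cc R_carrier K_carrier by auto
  then have "s \<otimes> n = c \<otimes> (r \<otimes> n) \<otimes> inv h" using cr(3) h by (simp add: m_ac)
  moreover have "r \<otimes> n \<in> R" using cr n subgroup.m_closed[OF R_subgroup] by auto
  moreover have "s \<otimes> n \<in> K" using cr n subgroup.m_closed[OF K_subgroup] by auto
  ultimately show "s \<otimes> n \<in> avoid_set C h"
    unfolding avoid_set_def r_coset_def set_mult_def using cr by blast
qed

text \<open>A point x = h' k of \<Psi> \<phi> \<inter> C in the coset \<Omega> h (with h' \<in> H0, k \<in> \<phi>(\<Omega> h')) forces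
  \<Omega> h' = \<Omega> h, and then k = x (h' h\<inverse>)\<inverse> h\<inverse> lies in \<phi>(\<Omega> h) \<inter> avoid_set C h \<dots>\<close>
lemma Psi_meets_in_coset_imp:
  assumes \<phi>: "\<phi> \<in> Hom" and h: "h \<in> H0" and Cc: "C \<subseteq> carrier G"
    and x: "x \<in> Psi \<phi>" "x \<in> \<Omega> #> h" "x \<in> C"
  shows "\<exists>k. k \<in> \<phi> (\<Omega> #> h) \<inter> avoid_set C h"
proof -
  have hc: "h \<in> carrier G" using h H0_carrier by auto
  from x(1) obtain h' k where hk: "h' \<in> H0" "k \<in> K" "k \<in> \<phi> (\<Omega> #> h')" "x = h' \<otimes> k"
    by (rule Psi_elem[OF \<phi>])
  have c: "h' \<in> carrier G" "k \<in> carrier G" "x \<in> carrier G"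
    using hk x(3) Cc H0_carrier K_carrier by auto
  text \<open>Since k \<in> K \<subseteq> \<Omega>, the representative h' lies in the coset \<Omega> h of x.\<close>
  have "x \<otimes> inv h \<in> \<Omega>" using x(2) rcos_mem_iff[OF \<Omega>_subgroup hc c(3)] by blast
  moreover have "inv k \<in> \<Omega>" using hk(2) K_\<Omega> subgroup.m_inv_closed[OF \<Omega>_subgroup] by blast
  ultimately have "(x \<otimes> inv h) \<otimes> inv k \<in> \<Omega>" using subgroup.m_closed[OF \<Omega>_subgroup] by blast
  moreover have "(x \<otimes> inv h) \<otimes> inv k = (x \<otimes> inv k) \<otimes> inv h" using c hc by (simp add: m_ac)
  moreover have "x \<otimes> inv k = h'" using hk(4) c by (simp add: m_assoc)
  ultimately have "h' \<otimes> inv h \<in> \<Omega>" by simp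
  then have same: "\<Omega> #> h' = \<Omega> #> h" using rcos_eq_iff[OF \<Omega>_subgroup c(1) hc] by blast
  then have r: "h' \<otimes> inv h \<in> R" using \<Omega>_rcos_H0_eq_iff[OF h hk(1)] by blast
  have "x \<otimes> inv (h' \<otimes> inv h) = k \<otimes> h"
    using quotient_common_factor[OF c(1,2) inv_closed[OF hc]] hk(4) hc by simp
  then have "k = x \<otimes> inv (h' \<otimes> inv h) \<otimes> inv h" using c hc by (simp add: m_assoc)
  then have "k \<in> (C <#> R) #> inv h"
    using x(3) r subgroup.m_inv_closed[OF R_subgroup] unfolding r_coset_def set_mult_def by blast
  then show ?thesis using hk same unfolding avoid_set_def by auto
qed

text \<open>\<dots> and conversely a point k = x r h\<inverse> of \<phi>(\<Omega> h) \<inter> avoid_set C h gives x = (r\<inverse> h) k \<in> \<Psi> \<phi>.\<close>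
lemma avoid_set_meets_imp:
  assumes \<phi>: "\<phi> \<in> Hom" and h: "h \<in> H0" and Cc: "C \<subseteq> carrier G"
    and k: "k \<in> \<phi> (\<Omega> #> h)" and k_avoid: "k \<in> avoid_set C h"
  shows "\<exists>x. x \<in> Psi \<phi> \<inter> (\<Omega> #> h) \<inter> C"
proof -
  have hc: "h \<in> carrier G" using h H0_carrier by auto
  have kK: "k \<in> K" using k_avoid unfolding avoid_set_def by blast
  obtain x r where xr: "x \<in> C" "r \<in> R" "k = x \<otimes> r \<otimes> inv h"
    using k_avoid unfolding avoid_set_def r_coset_def set_mult_def by blast
  have c: "x \<in> carrier G" "r \<in> carrier G" using xr Cc R_carrier by auto
  define h' where "h' = inv r \<otimes> h"
  have h': "h' \<in> H0" "h' \<otimes> inv h \<in> R"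
    using xr h c hc H0_\<Omega> subgroup.m_closed[OF H0_subgroup] subgroup.m_inv_closed[OF R_subgroup]
    by (auto simp: h'_def m_assoc)
  then have "\<Omega> #> h' = \<Omega> #> h" using \<Omega>_rcos_H0_eq_iff[OF h] by blast
  then have "k \<in> \<phi> (\<Omega> #> h')" using k by simp
  then have in_Psi: "h' \<otimes> k \<in> Psi \<phi>" unfolding Psi_def using h' by blast
  have x_eq: "inv r \<otimes> (x \<otimes> r) = x" using c by (simp add: m_comm[of x r] m_assoc[symmetric])
  have "h' \<otimes> k = inv r \<otimes> (h \<otimes> ((x \<otimes> r) \<otimes> inv h))" using xr(3) c hc by (simp add: h'_def m_assoc)
  also have "\<dots> = x" using c hc conj_cancel'[of h "x \<otimes> r"] x_eq by simp
  finally have product: "h' \<otimes> k = x" .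
  have "(inv r \<otimes> k) \<otimes> h = x" using xr(3) c hc x_eq by (simp add: m_assoc)
  then have "x \<in> \<Omega> #> h"
    using xr kK K_\<Omega> R_\<Omega> subgroup.m_closed[OF \<Omega>_subgroup] subgroup.m_inv_closed[OF R_subgroup]
    unfolding r_coset_def by blast
  then show ?thesis using in_Psi product xr(1) by blast
qed

lemma Psi_avoids_in_coset_iff:
  assumes "\<phi> \<in> Hom" "h \<in> H0" "C \<subseteq> carrier G"
  shows "Psi \<phi> \<inter> (\<Omega> #> h) \<inter> C = {} \<longleftrightarrow> \<phi> (\<Omega> #> h) \<inter> avoid_set C h = {}"
  using Psi_meets_in_coset_imp[OF assms] avoid_set_meets_imp[OF assms] by blast

lemma Psi_subset_H0_rcosets:
  assumes "\<phi> \<in> Hom" "x \<in> Psi \<phi>" shows "\<exists>h\<in>H0. x \<in> \<Omega> #> h"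
proof -
  obtain h k where hk: "h \<in> H0" "k \<in> K" "k \<in> \<phi> (\<Omega> #> h)" "x = h \<otimes> k"
    by (rule Psi_elem[OF assms])
  have "h \<otimes> k = k \<otimes> h" using hk(1,2) H0_carrier K_carrier by (intro m_comm) auto
  then have "x = k \<otimes> h" using hk(4) by simp
  then show ?thesis using hk K_\<Omega> unfolding r_coset_def by blast
qed

lemma finite_H0_rcosets_cover:
  assumes C: "compactin T C"
  obtains Hs where "finite Hs" "Hs \<subseteq> H0" "\<And>x h. x \<in> C \<Longrightarrow> h \<in> H0 \<Longrightarrow> x \<in> \<Omega> #> h \<Longrightarrow> \<exists>h'\<in>Hs. x \<in> \<Omega> #> h'"
proof -
  have Cc: "C \<subseteq> carrier G" using compactin_subset_topspace[OF C] topspace_eq by simp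
  have "\<forall>U\<in>(\<lambda>x. \<Omega> #> x) ` C. openin T U" "C \<subseteq> \<Union>((\<lambda>x. \<Omega> #> x) ` C)"
    using openin_rcoset[OF \<Omega>_open] rcos_self[OF _ \<Omega>_subgroup] Cc by auto
  then obtain F where F: "finite F" "F \<subseteq> (\<lambda>x. \<Omega> #> x) ` C" "C \<subseteq> \<Union>F"
    using C unfolding compactin_def by meson
  have "finite (F \<inter> (\<lambda>h. \<Omega> #> h) ` H0)" using F(1) by simp
  from finite_subset_image[OF this Int_lower2]
  obtain Hs where Hs: "Hs \<subseteq> H0" "finite Hs" "F \<inter> (\<lambda>h. \<Omega> #> h) ` H0 = (\<lambda>h. \<Omega> #> h) ` Hs"
    by blast
  show ?thesis
  proof (rule that[OF Hs(2,1)])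
    fix x h assume x: "x \<in> C" "h \<in> H0" "x \<in> \<Omega> #> h"
    then obtain c where c: "c \<in> F" "x \<in> c" using F by blast
    then have "c = \<Omega> #> x" using F(2) Cc rcos_same[OF \<Omega>_subgroup] by blast
    moreover have "\<Omega> #> x = \<Omega> #> h" using rcos_same[OF \<Omega>_subgroup] x H0_carrier by blast
    ultimately have "c \<in> (\<lambda>h. \<Omega> #> h) ` Hs" using c x Hs(3) by blast
    then show "\<exists>h'\<in>Hs. x \<in> \<Omega> #> h'" using c by blast
  qed
qed

lemma openin_PT_avoiding:
  assumes C: "compactin T C"
  shows "openin PT {\<phi> \<in> topspace PT. Psi \<phi> \<inter> C = {}}"
proof -
  have Cc: "C \<subseteq> carrier G" using compactin_subset_topspace[OF C] topspace_eq by simp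
  obtain Hs where Hs: "finite Hs" "Hs \<subseteq> H0"
    and cover: "\<And>x h. x \<in> C \<Longrightarrow> h \<in> H0 \<Longrightarrow> x \<in> \<Omega> #> h \<Longrightarrow> \<exists>h'\<in>Hs. x \<in> \<Omega> #> h'"
    using finite_H0_rcosets_cover[OF C] by blast
  define V where "V = topspace Maps \<inter>
    (\<Inter>h\<in>Hs. {f \<in> topspace Maps. f (\<Omega> #> h) \<in> {e \<in> carrier E. e \<inter> avoid_set C h = {}}})"
  have "openin Maps {f \<in> topspace Maps. f (\<Omega> #> h) \<in> {e \<in> carrier E. e \<inter> avoid_set C h = {}}}"
    if h: "h \<in> Hs" for h
  proof -
    have "\<Omega> #> h \<in> carrier D" "h \<in> carrier G" using h Hs(2) carrier_D_H0 H0_carrier by auto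
    then show ?thesis by (rule openin_Maps_eval[OF _ openin_TE_avoid_set[OF C]])
  qed
  then have V: "openin Maps V" unfolding V_def
    by (intro openin_Int_Inter finite_imageI openin_topspace) (use Hs(1) in blast)+
  have iff: "Psi \<phi> \<inter> C = {} \<longleftrightarrow> \<phi> \<in> V" if \<phi>: "\<phi> \<in> Hom" for \<phi>
  proof -
    have "Psi \<phi> \<inter> C = {} \<longleftrightarrow> (\<forall>h\<in>Hs. Psi \<phi> \<inter> (\<Omega> #> h) \<inter> C = {})"
      using Psi_subset_H0_rcosets[OF \<phi>] cover by blast
    also have "\<dots> \<longleftrightarrow> (\<forall>h\<in>Hs. \<phi> (\<Omega> #> h) \<inter> avoid_set C h = {})"
      using Psi_avoids_in_coset_iff[OF \<phi> _ Cc] Hs(2) by blast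
    also have "\<dots> \<longleftrightarrow> \<phi> \<in> V"
    proof -
      have "\<phi> \<in> topspace Maps" using \<phi> Hom_eq by blast
      moreover have "\<phi> (\<Omega> #> h) \<in> carrier E" if "h \<in> Hs" for h
        using \<phi>_carrier[OF \<phi>] Hs(2) that by blast
      ultimately show ?thesis unfolding V_def by auto
    qed
    finally show ?thesis .
  qed
  then have "{\<phi> \<in> topspace PT. Psi \<phi> \<inter> C = {}} = Hom \<inter> V" using topspace_PT by blast
  then show ?thesis using openin_PT_Int[OF V] by simp
qed

lemma Psi_continuous: "continuous_map PT (chabauty G T) Psi"
  using continuous_map_into_chabauty[of Psi PT] openin_PT_avoiding openin_PT_meeting
    Psi_in_fiber topspace_PT by blast

text \<open>\<Psi> is a continuous bijection from the compact space PT onto the Hausdorff fiber.\<close>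
lemma fiber_homeomorphic_PT: "subtopology (chabauty G T) fiber homeomorphic_space PT"
proof -
  have "homeomorphic_map PT (subtopology (chabauty G T) fiber) Psi"
  proof (rule continuous_imp_homeomorphic_map)
    show "compact_space PT" by (rule compact_PT)
    show "Hausdorff_space (subtopology (chabauty G T) fiber)"
      using Hausdorff_space_subtopology[OF Hausdorff_chabauty[OF Hausdorff locally_compact]] .
    show "continuous_map PT (subtopology (chabauty G T) fiber) Psi"
      unfolding continuous_map_in_subtopology using Psi_continuous Psi_in_fiber topspace_PT by auto
    show "Psi ` topspace PT = topspace (subtopology (chabauty G T) fiber)"
      using Psi_image topspace_PT topspace_chabauty by auto
    show "inj_on Psi (topspace PT)" using Psi_inj topspace_PT by simp
  qed
  then show ?thesis using homeomorphic_map_imp_homeomorphic_space homeomorphic_space_sym by blast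
qed

end

context fiber_setting
begin

lemma fiber_empty_or_homeomorphic:
  "fiber = {} \<or> subtopology (chabauty G T) fiber homeomorphic_space PT"
proof (cases "fiber = {}")
  case False
  then obtain H0 where H0: "H0 \<in> fiber" by blast
  then have sub: "subgroup H0 G" unfolding closed_subgroups_def by blast
  have H0_\<Omega>: "H0 \<inter> \<Omega> = R" using H0 by blast
  have "(\<lambda>h. K #> h) ` H0 = (\<lambda>m. K #> m) ` M" using H0 by blast
  then have cover: "H0 \<subseteq> M" "\<And>m. m \<in> M \<Longrightarrow> \<exists>h\<in>H0. \<exists>k\<in>K. m = h \<otimes> k"
    using rcosets_eq_iff[OF sub] by auto
  have "fiber_base G T K \<Omega> M R H0"
    by (rule fiber_base.intro[OF fiber_setting_axioms fiber_base_axioms.intro[OF sub H0_\<Omega> cover]])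
  then have "subtopology (chabauty G T) fiber homeomorphic_space PT"
    by (rule fiber_base.fiber_homeomorphic_PT)
  then show ?thesis ..
qed simp

end

theorem proposition5p1:
  fixes G :: "('a, 'b) monoid_scheme" and T :: "'a topology"
    and K \<Omega> M R :: "'a set"
  assumes LCA: "LCA_group G T"
    and K: "subgroup K G" "compactin T K"
    and \<Omega>: "subgroup \<Omega> G" "openin T \<Omega>" "K \<subseteq> \<Omega>"
    and R: "R \<in> closed_subgroups (G\<lparr>carrier := \<Omega>\<rparr>) (subtopology T \<Omega>)"
    and M: "M \<in> closed_subgroups G T" "K \<subseteq> M"
  defines "fiber \<equiv> {H \<in> closed_subgroups G T.
              H \<inter> \<Omega> = R \<and> (\<lambda>h. K #>\<^bsub>G\<^esub> h) ` H = (\<lambda>m. K #>\<^bsub>G\<^esub> m) ` M}"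
    and "D \<equiv> (G\<lparr>carrier := M <#>\<^bsub>G\<^esub> \<Omega>\<rparr>) Mod \<Omega>"
    and "TD \<equiv> quotient_group_topology (G\<lparr>carrier := M <#>\<^bsub>G\<^esub> \<Omega>\<rparr>)
                (subtopology T (M <#>\<^bsub>G\<^esub> \<Omega>)) \<Omega>"
    and "E \<equiv> (G\<lparr>carrier := K\<rparr>) Mod (K \<inter> R)"
    and "TE \<equiv> quotient_group_topology (G\<lparr>carrier := K\<rparr>) (subtopology T K) (K \<inter> R)"
  shows "compact_space (pointwise_hom_topology D TD E TE) \<and>
         (fiber = {} \<or>
          subtopology (chabauty G T) fiber homeomorphic_space pointwise_hom_topology D TD E TE)"
proof -
  have tcg: "topological_comm_group G T" using LCA_group_imp_topological_comm_group[OF LCA] .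
  interpret topological_comm_group G T by (rule tcg)
  text \<open>R is closed in \<Omega>, and \<Omega> is closed (being an open subgroup), so R is closed in G.\<close>
  have R_sub: "subgroup R (G\<lparr>carrier := \<Omega>\<rparr>)" and R_cl: "closedin (subtopology T \<Omega>) R"
    using R unfolding closed_subgroups_def by auto
  have "closedin T R"
    using closedin_trans_full[OF R_cl open_subgroup_closed[OF \<Omega>(1,2)]] .
  moreover have "subgroup R G" "R \<subseteq> \<Omega>"
    using incl_subgroup[OF \<Omega>(1) R_sub] subgroup.subset[OF R_sub] by auto
  moreover have "subgroup M G" using M(1) unfolding closed_subgroups_def by auto
  ultimately interpret fiber_setting G T K \<Omega> M R
    by (intro fiber_setting.intro[OF tcg] fiber_setting_axioms.intro)
      (use LCA K \<Omega> M(2) in \<open>auto simp: LCA_group_def\<close>)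
  show ?thesis
    unfolding fiber_def D_def TD_def E_def TE_def
    using compact_PT fiber_empty_or_homeomorphic by blast
qed

end
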